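(* Let $A=kQ/I$ be a toupie algebra over a field $k$ of characteristic zero and $i\ge3$. Then $B_i=\{w\|\alpha^{(k)}: \alpha^{(k)}\in{}_0\mathcal{B}_\omega,\ w\in\mathcal{A}_{i-1}\text{ a path from }0\text{ to }\omega\}$ is a basis of $\mathrm{HH}^i(A)$, computed as the degree-$i$ cohomology of the cochain complex $\mathrm{Hom}_{E^e}(\mathcal{P}_\bullet,A)$ described below (whose degree-$i$ term is $\mathrm{Hom}_{E^e}(k\mathcal{A}_{i-1},A)$).
   Context: A finite quiver $Q$ is a toupie quiver if it has a unique source $0$, a unique sink $\omega$, and every other vertex is the source of exactly one arrow and the target of exactly one arrow. Paths are composed left to right; a branch is a path from $0$ to $\omega$. A toupie algebra is $A=kQ/I$ with $Q$ toupie and $I$ an admissible ideal generated by monomial relations (paths inside one branch) and non-monomial relations (linear combinations of branches), the latter in reduced row echelon form $\rho_i=\alpha^{(k_i)}+\sum_{j>k_i}b_{ij}\alpha^{(j)}$. $R$ is a minimal generating set of $I$ formed by the $\rho_i$ and monomial relations. $E=kQ_0$. ${}_0\mathcal{B}_\omega$ is the set of classes of branches containing no monomial relation and different from all $\alpha^{(k_i)}$ (a basis of $e_0Ae_\omega$). For $n\ge2$, an $n$-ambiguity is a path $p$ with an arrow $u_0$ and paths $u_1,\dots,u_n$ not in $I$ such that $p=u_0\cdots u_n$ and for each $0\le j\le n-1$, $u_ju_{j+1}\in I$ but $u_jd\notin I$ for every proper left divisor $d$ of $u_{j+1}$; $\mathcal{A}_n$ is the set of $n$-ambiguities. The cochain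 complex is obtained by applying $\mathrm{Hom}_{A^e}(-,A)$ to the projective bimodule resolution $\cdots\to A\otimes_E k\mathcal{A}_2\otimes_EA\to A\otimes_EkR\otimes_EA\to A\otimes_EkQ_1\otimes_EA\to A\otimes_EA$ (the complex $C_{min}(A)$: with differentials $d_0(1\otimes\gamma\otimes1)=\gamma\otimes1-1\otimes\gamma$, $d_1(1\otimes r\otimes1)=\sum r^{(1)}\otimes r^{(2)}\otimes r^{(3)}$ over factorizations with $r^{(2)}$ an arrow, and for $v\in\mathcal{A}_n$, $n\ge2$, with factorizations $v=u_0\cdots u_n=w_n\cdots w_0$ as left and right ambiguity, $d_n(1\otimes v\otimes1)=\sum v^{(1)}\otimes v^{(2)}\otimes v^{(3)}$ with $v^{(2)}\in\mathcal{A}_{n-1}$ if $n$ odd, and $w_n\otimes w_{n-1}\cdots w_0\otimes1-1\otimes u_0\cdots u_{n-1}\otimes u_n$ if $n$ even, where $\mathcal{A}_1$ is the set of monomial relations in $R$), and identifying $\mathrm{Hom}_{A^e}(A\otimes_EX\otimes_EA,A)\cong\mathrm{Hom}_{E^e}(X,A)$. For $w\in\mathcal{A}_{i-1}$ and $c\in{}_0\mathcal{B}_\omega$, $w\|c$ sends $w$ to $c$ and the other ambiguities to $0$. *)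

theory Defs
  imports Main "HOL-Library.Function_Algebras"
begin

record ('v, 'e) quiver =
  verts :: "'v set"
  arrs  :: "'e set"
  src   :: "'e \<Rightarrow> 'v"
  tgt   :: "'e \<Rightarrow> 'v"

text \<open>A path is a start vertex together with a list of arrows (composition left to right).
  The trivial path at v is (v, []).\<close>
type_synonym ('v, 'e) path = "'v \<times> 'e list"

definition plen :: "('v, 'e) path \<Rightarrow> nat" where
  "plen p = length (snd p)"

definition pend :: "('v, 'e) quiver \<Rightarrow> ('v, 'e) path \<Rightarrow> 'v" where
  "pend Q p = (if snd p = [] then fst p else tgt Q (last (snd p)))"

definition is_path :: "('v, 'e) quiver \<Rightarrow> ('v, 'e) path \<Rightarrow> bool" where
  "is_path Q p \<longleftrightarrow> fst p \<in> verts Q \<and> set (snd p) \<subseteq> arrs Q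
     \<and> (snd p \<noteq> [] \<longrightarrow> src Q (hd (snd p)) = fst p)
     \<and> (\<forall>j. Suc j < length (snd p) \<longrightarrow> tgt Q (snd p ! j) = src Q (snd p ! Suc j))"

text \<open>Concatenation p q (p first); only meaningful when pend Q p = fst q.\<close>
definition pcomp :: "('v, 'e) path \<Rightarrow> ('v, 'e) path \<Rightarrow> ('v, 'e) path" where
  "pcomp p q = (fst p, snd p @ snd q)"

definition path_concat :: "('v, 'e) path list \<Rightarrow> ('v, 'e) path" where
  "path_concat ps = (fst (hd ps), concat (map snd ps))"

definition path_divides :: "('v, 'e) quiver \<Rightarrow> ('v, 'e) path \<Rightarrow> ('v, 'e) path \<Rightarrow> bool" where
  "path_divides Q q p \<longleftrightarrow> (\<exists>xs ys. snd p = xs @ snd q @ ys \<and> fst q = pend Q (fst p, xs))"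

section \<open>Path algebra kQ (elements: coefficient functions on paths)\<close>

type_synonym ('v, 'e, 'k) kq = "('v, 'e) path \<Rightarrow> 'k"

definition pe :: "('v, 'e) path \<Rightarrow> ('v, 'e, 'k::field) kq" where
  "pe p = (\<lambda>q. if q = p then 1 else 0)"

definition in_kQ :: "('v, 'e) quiver \<Rightarrow> ('v, 'e, 'k::field) kq \<Rightarrow> bool" where
  "in_kQ Q x \<longleftrightarrow> finite {p. x p \<noteq> 0} \<and> (\<forall>p. x p \<noteq> 0 \<longrightarrow> is_path Q p)"

definition ksmult :: "'k::field \<Rightarrow> ('v, 'e, 'k) kq \<Rightarrow> ('v, 'e, 'k) kq" where
  "ksmult c x = (\<lambda>p. c * x p)"

definition kmult :: "('v, 'e) quiver \<Rightarrow> ('v, 'e, 'k::field) kq \<Rightarrow> ('v, 'e, 'k) kq \<Rightarrow> ('v, 'e, 'k) kq" where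
  "kmult Q x y = (\<lambda>p. if is_path Q p then
      (\<Sum>k\<in>{0..length (snd p)}. x (fst p, take k (snd p)) * y (pend Q (fst p, take k (snd p)), drop k (snd p)))
    else 0)"

inductive_set ideal_gen :: "('v, 'e) quiver \<Rightarrow> ('v, 'e, 'k::field) kq set \<Rightarrow> ('v, 'e, 'k) kq set"
  for Q R where
  gen: "r \<in> R \<Longrightarrow> r \<in> ideal_gen Q R"
| zero: "0 \<in> ideal_gen Q R"
| add: "x \<in> ideal_gen Q R \<Longrightarrow> y \<in> ideal_gen Q R \<Longrightarrow> x + y \<in> ideal_gen Q R"
| lmult: "x \<in> ideal_gen Q R \<Longrightarrow> in_kQ Q a \<Longrightarrow> kmult Q a x \<in> ideal_gen Q R"
| rmult: "x \<in> ideal_gen Q R \<Longrightarrow> in_kQ Q a \<Longrightarrow> kmult Q x a \<in> ideal_gen Q R"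

text \<open>Admissible ideal: J^N \<subseteq> I \<subseteq> J^2, J the arrow ideal.\<close>
definition admissible :: "('v, 'e) quiver \<Rightarrow> ('v, 'e, 'k::field) kq set \<Rightarrow> bool" where
  "admissible Q I \<longleftrightarrow> (\<forall>x\<in>I. \<forall>p. x p \<noteq> 0 \<longrightarrow> 2 \<le> plen p)
     \<and> (\<exists>N. \<forall>p. is_path Q p \<and> N \<le> plen p \<longrightarrow> pe p \<in> I)"

definition toupie :: "('v, 'e) quiver \<Rightarrow> 'v \<Rightarrow> 'v \<Rightarrow> bool" where
  "toupie Q v0 vw \<longleftrightarrow> finite (verts Q) \<and> finite (arrs Q)
     \<and> (\<forall>a\<in>arrs Q. src Q a \<in> verts Q \<and> tgt Q a \<in> verts Q)
     \<and> v0 \<in> verts Q \<and> vw \<in> verts Q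
     \<and> (\<forall>v\<in>verts Q. (\<not> (\<exists>a\<in>arrs Q. tgt Q a = v)) \<longleftrightarrow> v = v0)
     \<and> (\<forall>v\<in>verts Q. (\<not> (\<exists>a\<in>arrs Q. src Q a = v)) \<longleftrightarrow> v = vw)
     \<and> (\<forall>v\<in>verts Q - {v0, vw}. card {a\<in>arrs Q. src Q a = v} = 1 \<and> card {a\<in>arrs Q. tgt Q a = v} = 1)"

definition is_branch :: "('v, 'e) quiver \<Rightarrow> 'v \<Rightarrow> 'v \<Rightarrow> ('v, 'e) path \<Rightarrow> bool" where
  "is_branch Q v0 vw p \<longleftrightarrow> is_path Q p \<and> fst p = v0 \<and> pend Q p = vw"

text \<open>Non-monomial relation rho_i = alpha^(k_i) + sum_{j > k_i} b_ij alpha^(j)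
  (branches enumerated as br 0, ..., br (m-1)).\<close>
definition rho :: "(nat \<Rightarrow> ('v, 'e) path) \<Rightarrow> nat \<Rightarrow> (nat \<Rightarrow> nat) \<Rightarrow> (nat \<Rightarrow> nat \<Rightarrow> 'k::field)
    \<Rightarrow> nat \<Rightarrow> ('v, 'e, 'k) kq" where
  "rho br m kk b i = pe (br (kk i)) + (\<Sum>j\<in>{kk i<..<m}. ksmult (b i j) (pe (br j)))"

definition rels :: "('v, 'e) path set \<Rightarrow> (nat \<Rightarrow> ('v, 'e) path) \<Rightarrow> nat \<Rightarrow> nat \<Rightarrow> (nat \<Rightarrow> nat)
    \<Rightarrow> (nat \<Rightarrow> nat \<Rightarrow> 'k::field) \<Rightarrow> ('v, 'e, 'k) kq set" where
  "rels Rmon br m r kk b = pe ` Rmon \<union> rho br m kk b ` {..<r}"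

definition contains_monomial :: "('v, 'e) quiver \<Rightarrow> ('v, 'e) path set \<Rightarrow> ('v, 'e) path \<Rightarrow> bool" where
  "contains_monomial Q Rmon p \<longleftrightarrow> (\<exists>q\<in>Rmon. path_divides Q q p)"

definition toupie_algebra :: "('v, 'e) quiver \<Rightarrow> 'v \<Rightarrow> 'v \<Rightarrow> ('v, 'e) path set \<Rightarrow> (nat \<Rightarrow> ('v, 'e) path)
    \<Rightarrow> nat \<Rightarrow> nat \<Rightarrow> (nat \<Rightarrow> nat) \<Rightarrow> (nat \<Rightarrow> nat \<Rightarrow> 'k::field) \<Rightarrow> ('v, 'e, 'k) kq set \<Rightarrow> bool" where
  "toupie_algebra Q v0 vw Rmon br m r kk b I \<longleftrightarrow>
     toupie Q v0 vw
     \<and> bij_betw br {..<m} {p. is_branch Q v0 vw p}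
     \<comment> \<open>monomial relations: paths inside one branch\<close>
     \<and> (\<forall>q\<in>Rmon. is_path Q q \<and> (\<exists>j<m. path_divides Q q (br j)))
     \<comment> \<open>non-monomial relations in reduced row echelon form\<close>
     \<and> strict_mono_on {..<r} kk \<and> (\<forall>i<r. kk i < m)
     \<and> (\<forall>i<r. \<forall>l<r. l \<noteq> i \<longrightarrow> b i (kk l) = 0)
     \<and> (\<forall>i<r. \<exists>j. kk i < j \<and> j < m \<and> b i j \<noteq> 0)
     \<comment> \<open>branches occurring in non-monomial relations contain no monomial relation\<close>
     \<and> (\<forall>i<r. \<forall>j<m. (j = kk i \<or> (kk i < j \<and> b i j \<noteq> 0)) \<longrightarrow> \<not> contains_monomial Q Rmon (br j))
     \<comment> \<open>I generated by R, admissible, R minimal\<close>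
     \<and> I = ideal_gen Q (rels Rmon br m r kk b)
     \<and> admissible Q I
     \<and> (\<forall>x\<in>rels Rmon br m r kk b. x \<notin> ideal_gen Q (rels Rmon br m r kk b - {x}))"

text \<open>The set of branches forming the basis {}_0B_omega of e_0 A e_omega.\<close>
definition B0w :: "('v, 'e) quiver \<Rightarrow> ('v, 'e) path set \<Rightarrow> (nat \<Rightarrow> ('v, 'e) path) \<Rightarrow> nat \<Rightarrow> nat
    \<Rightarrow> (nat \<Rightarrow> nat) \<Rightarrow> ('v, 'e) path set" where
  "B0w Q Rmon br m r kk = {br j | j. j < m \<and> \<not> contains_monomial Q Rmon (br j) \<and> j \<notin> kk ` {..<r}}"

text \<open>Left ambiguity factorization v = u_0 ... u_n, us = [u_0, ..., u_n].\<close>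
definition left_amb_fact :: "('v, 'e) quiver \<Rightarrow> ('v, 'e, 'k::field) kq set \<Rightarrow> nat \<Rightarrow> ('v, 'e) path
    \<Rightarrow> ('v, 'e) path list \<Rightarrow> bool" where
  "left_amb_fact Q I n v us \<longleftrightarrow> length us = Suc n
     \<and> (\<forall>u\<in>set us. is_path Q u)
     \<and> (\<forall>j<n. pend Q (us ! j) = fst (us ! Suc j))
     \<and> v = path_concat us
     \<and> plen (us ! 0) = 1
     \<and> (\<forall>j\<in>{1..n}. pe (us ! j) \<notin> I)
     \<and> (\<forall>j<n. pe (pcomp (us ! j) (us ! Suc j)) \<in> I
          \<and> (\<forall>d ys. is_path Q d \<and> fst d = fst (us ! Suc j) \<and> snd (us ! Suc j) = snd d @ ys \<and> ys \<noteq> []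
                 \<longrightarrow> pe (pcomp (us ! j) d) \<notin> I))"

text \<open>Right ambiguity factorization v = w_n ... w_0, ws = [w_0, ..., w_n].\<close>
definition right_amb_fact :: "('v, 'e) quiver \<Rightarrow> ('v, 'e, 'k::field) kq set \<Rightarrow> nat \<Rightarrow> ('v, 'e) path
    \<Rightarrow> ('v, 'e) path list \<Rightarrow> bool" where
  "right_amb_fact Q I n v ws \<longleftrightarrow> length ws = Suc n
     \<and> (\<forall>w\<in>set ws. is_path Q w)
     \<and> (\<forall>j<n. pend Q (ws ! Suc j) = fst (ws ! j))
     \<and> v = path_concat (rev ws)
     \<and> plen (ws ! 0) = 1
     \<and> (\<forall>j\<in>{1..n}. pe (ws ! j) \<notin> I)
     \<and> (\<forall>j<n. pe (pcomp (ws ! Suc j) (ws ! j)) \<in> I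
          \<and> (\<forall>d xs. is_path Q d \<and> snd (ws ! Suc j) = xs @ snd d \<and> xs \<noteq> []
                   \<and> fst d = pend Q (fst (ws ! Suc j), xs)
                 \<longrightarrow> pe (pcomp d (ws ! j)) \<notin> I))"

definition amb :: "('v, 'e) quiver \<Rightarrow> ('v, 'e, 'k::field) kq set \<Rightarrow> nat \<Rightarrow> ('v, 'e) path \<Rightarrow> bool" where
  "amb Q I n v \<longleftrightarrow> is_path Q v \<and> (\<exists>us. left_amb_fact Q I n v us)"

definition lfact :: "('v, 'e) quiver \<Rightarrow> ('v, 'e, 'k::field) kq set \<Rightarrow> nat \<Rightarrow> ('v, 'e) path \<Rightarrow> ('v, 'e) path list" where
  "lfact Q I n v = (SOME us. left_amb_fact Q I n v us)"

definition rfact :: "('v, 'e) quiver \<Rightarrow> ('v, 'e, 'k::field) kq set \<Rightarrow> nat \<Rightarrow> ('v, 'e) path \<Rightarrow> ('v, 'e) path list" where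
  "rfact Q I n v = (SOME ws. right_amb_fact Q I n v ws)"

section \<open>The cochain complex Hom_{E^e}(P_n, A), n \<ge> 2\<close>

text \<open>A cochain is represented by a function from generators (elements of kQ) to
  representatives in kQ of elements of A = kQ/I.  Generators of P_n = A \<otimes>_E kX \<otimes>_E A:
  X = R for n = 2, X = A_{n-1} (as basis elements pe v) for n \<ge> 3.\<close>
type_synonym ('v, 'e, 'k) cochain = "('v, 'e, 'k) kq \<Rightarrow> ('v, 'e, 'k) kq"

definition gens :: "('v, 'e) quiver \<Rightarrow> ('v, 'e, 'k::field) kq set \<Rightarrow> ('v, 'e, 'k) kq set \<Rightarrow> nat
    \<Rightarrow> ('v, 'e, 'k) kq set" where
  "gens Q I R n = (if n = 2 then R else pe ` {v. amb Q I (n - 1) v})"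

definition supp_in :: "('v, 'e) quiver \<Rightarrow> ('v, 'e, 'k::field) kq \<Rightarrow> 'v \<Rightarrow> 'v \<Rightarrow> bool" where
  "supp_in Q x a c \<longleftrightarrow> (\<forall>p. x p \<noteq> 0 \<longrightarrow> fst p = a \<and> pend Q p = c)"

text \<open>E^e-linear maps: a generator lying in e_a kQ e_c goes to e_a A e_c.\<close>
definition cochains :: "('v, 'e) quiver \<Rightarrow> ('v, 'e, 'k::field) kq set \<Rightarrow> ('v, 'e, 'k) kq set \<Rightarrow> nat
    \<Rightarrow> ('v, 'e, 'k) cochain set" where
  "cochains Q I R n = {f. \<forall>x\<in>gens Q I R n. in_kQ Q (f x)
       \<and> (\<forall>a c. supp_in Q x a c \<longrightarrow> supp_in Q (f x) a c)}"

text \<open>(f \<circ> d_n)(1 \<otimes> v \<otimes> 1) for v \<in> A_n, n \<ge> 2.\<close>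
definition dual_d :: "('v, 'e) quiver \<Rightarrow> ('v, 'e, 'k::field) kq set \<Rightarrow> nat \<Rightarrow> ('v, 'e, 'k) cochain
    \<Rightarrow> ('v, 'e) path \<Rightarrow> ('v, 'e, 'k) kq" where
  "dual_d Q I n f v =
    (if odd n then
       (\<Sum>(a, c)\<in>{(a, c). a \<le> c \<and> c \<le> plen v}.
          (let l = (fst v, take a (snd v));
               mid = (pend Q l, take (c - a) (drop a (snd v)));
               rt = (pend Q mid, drop c (snd v))
           in if amb Q I (n - 1) mid then kmult Q (kmult Q (pe l) (f (pe mid))) (pe rt) else 0))
     else
       (let us = lfact Q I n v; ws = rfact Q I n v
        in kmult Q (pe (ws ! n)) (f (pe (path_concat (rev (take n ws)))))
           - kmult Q (f (pe (path_concat (take n us)))) (pe (us ! n))))"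

text \<open>Cocycles: ker(delta^n : C^n \<rightarrow> C^{n+1}) modulo I.\<close>
definition cocycles :: "('v, 'e) quiver \<Rightarrow> ('v, 'e, 'k::field) kq set \<Rightarrow> ('v, 'e, 'k) kq set \<Rightarrow> nat
    \<Rightarrow> ('v, 'e, 'k) cochain set" where
  "cocycles Q I R n = {f \<in> cochains Q I R n. \<forall>v. amb Q I n v \<longrightarrow> dual_d Q I n f v \<in> I}"

text \<open>Coboundaries: im(delta^{n-1} : C^{n-1} \<rightarrow> C^n), for n \<ge> 3, modulo I.\<close>
definition coboundaries :: "('v, 'e) quiver \<Rightarrow> ('v, 'e, 'k::field) kq set \<Rightarrow> ('v, 'e, 'k) kq set \<Rightarrow> nat
    \<Rightarrow> ('v, 'e, 'k) cochain set" where
  "coboundaries Q I R n = {f \<in> cochains Q I R n. \<exists>g\<in>cochains Q I R (n - 1).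
       \<forall>v. amb Q I (n - 1) v \<longrightarrow> f (pe v) - dual_d Q I (n - 1) g v \<in> I}"

definition csmult :: "'k::field \<Rightarrow> ('v, 'e, 'k) cochain \<Rightarrow> ('v, 'e, 'k) cochain" where
  "csmult c f = (\<lambda>x p. c * f x p)"

definition hbar :: "('v, 'e) path \<Rightarrow> ('v, 'e) path \<Rightarrow> ('v, 'e, 'k::field) cochain" where
  "hbar w c = (\<lambda>x. if x = pe w then pe c else 0)"

text \<open>The classes of the family vec (indexed by J) form a basis of the quotient Z / B.\<close>
definition quotient_basis :: "('v, 'e, 'k::field) cochain set \<Rightarrow> ('v, 'e, 'k) cochain set
    \<Rightarrow> 'j set \<Rightarrow> ('j \<Rightarrow> ('v, 'e, 'k) cochain) \<Rightarrow> bool" where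
  "quotient_basis Z Bd J vec \<longleftrightarrow> (\<forall>j\<in>J. vec j \<in> Z)
     \<and> (\<forall>z\<in>Z. \<exists>!lam. finite {j. lam j \<noteq> 0} \<and> (\<forall>j. j \<notin> J \<longrightarrow> lam j = 0)
            \<and> z - (\<Sum>j\<in>{j. lam j \<noteq> 0}. csmult (lam j) (vec j)) \<in> Bd)"

end

theory Submission
  imports Defs
begin

text \<open>In a toupie quiver every vertex other than the source and the sink has exactly one incoming
  and one outgoing arrow, so a subpath of a branch that is not itself a branch is the only path
  between its endpoints. Every ambiguity contains a relation and therefore lies inside a branch, so
  a cochain sends a non-branch ambiguity w to a scalar multiple of w, which lies in I. The same holds
  for each term of a coboundary evaluated at a branch ambiguity w: in odd degree the inner
  ambiguities are proper subpaths of w, in even degree the outer factors of its left and right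
  factorisations are proper, and neither is a branch. So coboundaries vanish modulo I on branch
  ambiguities, the w || c are cocycles, and a cochain is determined in cohomology by its values at
  the branch ambiguities, taken in e_0 A e_omega; this space has basis {}_0B_omega because on
  monomial-free paths I is spanned by the rho_i.

  The combinatorics of ambiguities is handled through the positions at which their left and right
  factorisations cut the path; these form "left" and "right" chains, and reading positions backwards
  exchanges the two.\<close>

section \<open>Paths\<close>

definition wf_quiver :: "('v, 'e) quiver \<Rightarrow> bool" where
  "wf_quiver Q \<longleftrightarrow> (\<forall>a\<in>arrs Q. src Q a \<in> verts Q \<and> tgt Q a \<in> verts Q)"

lemma pend_Nil[simp]: "pend Q (a, []) = a"
  by (simp add: pend_def)

lemma pend_Cons[simp]: "pend Q (a, x # xs) = pend Q (tgt Q x, xs)"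
  by (simp add: pend_def)

lemma pend_append: "pend Q (a, xs @ ys) = pend Q (pend Q (a, xs), ys)"
  by (induction xs arbitrary: a) auto

lemma is_path_Nil[simp]: "is_path Q (a, []) \<longleftrightarrow> a \<in> verts Q"
  by (simp add: is_path_def)

lemma is_path_Cons:
  assumes "wf_quiver Q"
  shows "is_path Q (a, x # xs) \<longleftrightarrow> x \<in> arrs Q \<and> src Q x = a \<and> is_path Q (tgt Q x, xs)"
proof
  assume h: "is_path Q (a, x # xs)"
  then have x: "x \<in> arrs Q" "src Q x = a" by (auto simp: is_path_def)
  have "is_path Q (tgt Q x, xs)"
    unfolding is_path_def
  proof (intro conjI allI impI)
    show "fst (tgt Q x, xs) \<in> verts Q" using x assms by (auto simp: wf_quiver_def)
    show "set (snd (tgt Q x, xs)) \<subseteq> arrs Q" using h by (auto simp: is_path_def)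
    assume "snd (tgt Q x, xs) \<noteq> []"
    then show "src Q (hd (snd (tgt Q x, xs))) = fst (tgt Q x, xs)"
      using h unfolding is_path_def by (cases xs) (auto dest: spec[of _ 0])
  next
    fix j assume "Suc j < length (snd (tgt Q x, xs))"
    then show "tgt Q (snd (tgt Q x, xs) ! j) = src Q (snd (tgt Q x, xs) ! Suc j)"
      using h unfolding is_path_def by (auto dest: spec[of _ "Suc j"])
  qed
  then show "x \<in> arrs Q \<and> src Q x = a \<and> is_path Q (tgt Q x, xs)" using x by simp
next
  assume h: "x \<in> arrs Q \<and> src Q x = a \<and> is_path Q (tgt Q x, xs)"
  show "is_path Q (a, x # xs)"
    unfolding is_path_def
  proof (intro conjI allI impI)
    show "fst (a, x # xs) \<in> verts Q" using h assms by (auto simp: wf_quiver_def)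
    show "set (snd (a, x # xs)) \<subseteq> arrs Q" using h by (auto simp: is_path_def)
    show "src Q (hd (snd (a, x # xs))) = fst (a, x # xs)" using h by simp
  next
    fix j assume j: "Suc j < length (snd (a, x # xs))"
    show "tgt Q (snd (a, x # xs) ! j) = src Q (snd (a, x # xs) ! Suc j)"
    proof (cases j)
      case 0 then show ?thesis using h j by (cases xs) (auto simp: is_path_def)
    next
      case (Suc j') then show ?thesis using h j by (auto simp: is_path_def)
    qed
  qed
qed

lemma is_path_append:
  assumes "wf_quiver Q"
  shows "is_path Q (a, xs @ ys) \<longleftrightarrow> is_path Q (a, xs) \<and> is_path Q (pend Q (a, xs), ys)"
proof (induction xs arbitrary: a)
  case Nil
  then show ?case using assms by (cases ys) (auto simp: is_path_Cons[OF assms] wf_quiver_def)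
next
  case (Cons x xs)
  then show ?case by (auto simp: is_path_Cons[OF assms])
qed

text \<open>Positions on a path v run from 0 to plen v: pvert Q v k is the vertex at position k and
  psub Q v s e the subpath from position s to position e.\<close>

definition pvert :: "('v, 'e) quiver \<Rightarrow> ('v, 'e) path \<Rightarrow> nat \<Rightarrow> 'v" where
  "pvert Q v k = pend Q (fst v, take k (snd v))"

definition psub :: "('v, 'e) quiver \<Rightarrow> ('v, 'e) path \<Rightarrow> nat \<Rightarrow> nat \<Rightarrow> ('v, 'e) path" where
  "psub Q v s e = (pvert Q v s, take (e - s) (drop s (snd v)))"

lemma fst_psub[simp]: "fst (psub Q v s e) = pvert Q v s"
  by (simp add: psub_def)

lemma snd_psub: "snd (psub Q v s e) = take (e - s) (drop s (snd v))"
  by (simp add: psub_def)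

lemma pvert_0[simp]: "pvert Q v 0 = fst v"
  by (simp add: pvert_def)

lemma pvert_plen: "pvert Q v (plen v) = pend Q v"
  by (simp add: pvert_def plen_def)

lemma plen_psub: "e \<le> plen v \<Longrightarrow> plen (psub Q v s e) = e - s"
  by (simp add: psub_def plen_def)

lemma take_append_take_drop: "s \<le> e \<Longrightarrow> take s xs @ take (e - s) (drop s xs) = take e xs"
  by (metis le_add_diff_inverse take_add)

lemma pend_psub: "s \<le> e \<Longrightarrow> pend Q (psub Q v s e) = pvert Q v e"
  unfolding psub_def pvert_def
  by (simp add: pend_append[symmetric] take_append_take_drop)

lemma is_path_psub:
  assumes wf: "wf_quiver Q" and p: "is_path Q v"
  shows "is_path Q (psub Q v s e)"
proof -
  obtain a xs where v: "v = (a, xs)" by (cases v)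
  have "xs = take s xs @ (take (e - s) (drop s xs) @ drop (e - s) (drop s xs))" by (simp only: append_take_drop_id)
  then have "is_path Q (a, take s xs @ (take (e - s) (drop s xs) @ drop (e - s) (drop s xs)))"
    using p v by simp
  then show ?thesis
    unfolding is_path_append[OF wf] psub_def pvert_def v by simp
qed

lemma psub_full: "psub Q v 0 (plen v) = v"
  by (simp add: psub_def plen_def)

lemma take_drop_append_take_drop: "a \<le> b \<Longrightarrow> b \<le> c \<Longrightarrow> take (b - a) (drop a xs) @ take (c - b) (drop b xs) = take (c - a) (drop a xs)"
proof -
  assume h: "a \<le> b" "b \<le> c"
  have "take (c - a) (drop a xs) = take ((b - a) + (c - b)) (drop a xs)" using h by simp
  also have "\<dots> = take (b - a) (drop a xs) @ take (c - b) (drop (b - a) (drop a xs))" by (rule take_add)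
  also have "drop (b - a) (drop a xs) = drop b xs" using h by simp
  finally show ?thesis by simp
qed

lemma pcomp_psub: "a \<le> b \<Longrightarrow> b \<le> c \<Longrightarrow> pcomp (psub Q v a b) (psub Q v b c) = psub Q v a c"
  unfolding pcomp_def psub_def
  by (simp add: take_drop_append_take_drop)

lemma snd_psub_append: "a \<le> s \<Longrightarrow> s \<le> b \<Longrightarrow> snd (psub Q v a b) = snd (psub Q v a s) @ snd (psub Q v s b)"
  by (metis pcomp_psub pcomp_def snd_conv)

lemma psub_nonempty: "s < b \<Longrightarrow> b \<le> plen v \<Longrightarrow> snd (psub Q v s b) \<noteq> []"
  using plen_psub[of b v Q s] by (auto simp: plen_def)

lemma pvert_psub: "a \<le> b \<Longrightarrow> s \<le> b - a \<Longrightarrow> pvert Q (psub Q v a b) s = pvert Q v (a + s)"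
  unfolding pvert_def psub_def
  by (simp add: pend_append[symmetric] take_append_take_drop[symmetric] min_def take_add)

lemma psub_psub: "a \<le> b \<Longrightarrow> s \<le> e \<Longrightarrow> e \<le> b - a \<Longrightarrow> psub Q (psub Q v a b) s e = psub Q v (a + s) (a + e)"
  apply (simp add: psub_def pvert_psub[unfolded psub_def])
  apply (simp add: drop_take add.commute)
  done

lemma pvert_Suc: "k < length (snd v) \<Longrightarrow> pvert Q v (Suc k) = tgt Q (snd v ! k)"
  unfolding pvert_def pend_def by (simp add: take_Suc_conv_app_nth)

lemma src_nth_pvert: 
  assumes "is_path Q v" "k < length (snd v)"
  shows "src Q (snd v ! k) = pvert Q v k"
proof (cases k)
  case 0 then show ?thesis using assms by (cases v, cases "snd v") (auto simp: is_path_def)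
next
  case (Suc j) then show ?thesis using assms pvert_Suc[of j v Q] by (auto simp: is_path_def)
qed

lemma path_divides_psub:
  assumes "s \<le> e" "e \<le> plen p" "path_divides Q q (psub Q p s e)"
  shows "path_divides Q q p"
proof -
  obtain xs ys where h: "snd (psub Q p s e) = xs @ snd q @ ys" "fst q = pend Q (fst (psub Q p s e), xs)"
    using assms(3) by (auto simp: path_divides_def)
  have "snd p = take s (snd p) @ take (e - s) (drop s (snd p)) @ drop (e - s) (drop s (snd p))"
    by (simp only: append_take_drop_id)
  then have "snd p = (take s (snd p) @ xs) @ snd q @ (ys @ drop (e - s) (drop s (snd p)))"
    using h(1) by (simp add: snd_psub)
  moreover have "fst q = pend Q (fst p, take s (snd p) @ xs)"
    using h(2) by (simp add: pend_append pvert_def)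
  ultimately show ?thesis unfolding path_divides_def by blast
qed

lemma prefix_eq_psub: "(fst p, take k (snd p)) = psub Q p 0 k"
  by (simp add: psub_def)

lemma suffix_eq_psub: "(pend Q (fst p, take k (snd p)), drop k (snd p)) = psub Q p k (plen p)"
  by (simp add: psub_def pvert_def plen_def)

section \<open>The path algebra\<close>

lemma sum_fun_app: "(sum f A) x = sum (\<lambda>a. f a x) A"
  by (induction A rule: infinite_finite_induct) auto

lemma pe_apply: "pe p q = (if q = p then 1 else 0)"
  by (simp add: pe_def)

lemma pe_inj: "pe p = (pe q :: ('v,'e,'k::field) kq) \<longleftrightarrow> p = q"
  by (metis pe_def one_neq_zero)

lemma kmult_pe_pe:
  assumes wf: "wf_quiver Q" and p: "is_path Q p" and q: "is_path Q q" and pq: "pend Q p = fst q"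
  shows "kmult Q (pe p) (pe q) = (pe (pcomp p q) :: ('v,'e,'k::field) kq)"
proof (rule ext)
  fix r :: "('v,'e) path"
  have pqp: "is_path Q (pcomp p q)"
    using p q pq by (cases p, cases q) (auto simp: pcomp_def is_path_append[OF wf])
  show "kmult Q (pe p) (pe q) r = (pe (pcomp p q) r :: 'k)"
  proof (cases "is_path Q r")
    case False
    then have "r \<noteq> pcomp p q" using pqp by auto
    then show ?thesis using False by (simp add: kmult_def pe_apply)
  next
    case True
    have trm: "(pe p (fst r, take k (snd r)) * pe q (pend Q (fst r, take k (snd r)), drop k (snd r)) :: 'k)
       = (if r = pcomp p q \<and> k = length (snd p) then 1 else 0)" if "k \<in> {0..length (snd r)}" for k
    proof (cases "r = pcomp p q \<and> k = length (snd p)")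
      case True
      then show ?thesis using pq by (cases p, cases q) (auto simp: pe_apply pcomp_def)
    next
      case False
      have "\<not> ((fst r, take k (snd r)) = p \<and> (pend Q (fst r, take k (snd r)), drop k (snd r)) = q)"
      proof
        assume h: "(fst r, take k (snd r)) = p \<and> (pend Q (fst r, take k (snd r)), drop k (snd r)) = q"
        then have "r = pcomp p q" 
          by (cases r) (auto simp: pcomp_def)
        moreover have "k = length (snd p)" using h that by auto
        ultimately show False using False by simp
      qed
      then show ?thesis using False by (auto simp: pe_apply)
    qed
    have "kmult Q (pe p) (pe q) r = (\<Sum>k\<in>{0..length (snd r)}. (pe p (fst r, take k (snd r)) * pe q (pend Q (fst r, take k (snd r)), drop k (snd r)) :: 'k))"
      using True by (simp add: kmult_def)
    also have "\<dots> = (\<Sum>k\<in>{0..length (snd r)}. (if r = pcomp p q \<and> k = length (snd p) then 1 else 0 :: 'k))"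
      by (rule sum.cong[OF refl trm])
    also have "\<dots> = (if r = pcomp p q then 1 else 0)"
    proof (cases "r = pcomp p q")
      case True
      then have "length (snd p) \<in> {0..length (snd r)}" by (simp add: pcomp_def)
      then show ?thesis using True by (simp add: sum.delta)
    qed simp
    finally show ?thesis by (simp add: pe_apply)
  qed
qed

lemma kmult_zero_left[simp]: "kmult Q 0 z = 0"
  by (rule ext) (simp add: kmult_def)

lemma kmult_zero_right[simp]: "kmult Q x 0 = 0"
  by (rule ext) (simp add: kmult_def)

lemma kmult_smult_left: "kmult Q (ksmult c x) z = ksmult c (kmult Q x z)"
  by (rule ext) (simp add: kmult_def ksmult_def sum_distrib_left mult.assoc)

lemma kmult_smult_right: "kmult Q x (ksmult c z) = ksmult c (kmult Q x z)"
  by (rule ext) (simp add: kmult_def ksmult_def sum_distrib_left mult.left_commute)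

lemma ksmult_apply: "ksmult c x p = c * x p"
  by (simp add: ksmult_def)

lemma in_kQ_pe: "is_path Q p \<Longrightarrow> in_kQ Q (pe p)"
  by (auto simp: in_kQ_def pe_apply)

lemma in_kQ_add: "in_kQ Q x \<Longrightarrow> in_kQ Q y \<Longrightarrow> in_kQ Q (x + y)"
proof -
  assume h: "in_kQ Q x" "in_kQ Q y"
  have "{p. (x + y) p \<noteq> 0} \<subseteq> {p. x p \<noteq> 0} \<union> {p. y p \<noteq> 0}" by auto
  then show ?thesis using h unfolding in_kQ_def by (auto intro: finite_subset)
qed

lemma in_kQ_smult: "in_kQ Q x \<Longrightarrow> in_kQ Q (\<lambda>p. c * x p)"
proof -
  assume h: "in_kQ Q x"
  have "{p. c * x p \<noteq> 0} \<subseteq> {p. x p \<noteq> 0}" by auto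
  then show ?thesis using h unfolding in_kQ_def by (auto intro: finite_subset)
qed

lemma in_kQ_diff: "in_kQ Q x \<Longrightarrow> in_kQ Q y \<Longrightarrow> in_kQ Q (x - y)"
proof -
  assume h: "in_kQ Q x" "in_kQ Q y"
  have "{p. (x - y) p \<noteq> 0} \<subseteq> {p. x p \<noteq> 0} \<union> {p. y p \<noteq> 0}" by auto
  then show ?thesis using h unfolding in_kQ_def by (auto intro: finite_subset)
qed

lemma supp_in_add: "supp_in Q x a c \<Longrightarrow> supp_in Q y a c \<Longrightarrow> supp_in Q (x + y) a c"
  unfolding supp_in_def by (metis add.right_neutral add_0 plus_fun_apply)

lemma supp_in_diff: "supp_in Q x a c \<Longrightarrow> supp_in Q y a c \<Longrightarrow> supp_in Q (x - y) a c"
  unfolding supp_in_def by (metis diff_self diff_zero fun_diff_def)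

lemma supp_in_smult: "supp_in Q x a c \<Longrightarrow> supp_in Q (\<lambda>p. k * x p) a c"
  unfolding supp_in_def by auto

lemma cochains_zero: "0 \<in> cochains Q I R n"
  by (simp add: cochains_def in_kQ_def supp_in_def)

lemma cochains_add: "f \<in> cochains Q I R n \<Longrightarrow> g \<in> cochains Q I R n \<Longrightarrow> f + g \<in> cochains Q I R n"
  by (simp add: cochains_def in_kQ_add supp_in_add)

lemma cochains_diff: "f \<in> cochains Q I R n \<Longrightarrow> g \<in> cochains Q I R n \<Longrightarrow> f - g \<in> cochains Q I R n"
  by (simp add: cochains_def in_kQ_diff supp_in_diff fun_diff_def[of f g])

lemma cochains_csmult: "f \<in> cochains Q I R n \<Longrightarrow> csmult k f \<in> cochains Q I R n"
  by (simp add: cochains_def csmult_def in_kQ_smult supp_in_smult)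

lemma cochains_sum: "(\<And>a. a \<in> A \<Longrightarrow> f a \<in> cochains Q I R n) \<Longrightarrow> sum f A \<in> cochains Q I R n"
proof (induction A rule: infinite_finite_induct)
  case (infinite A) then show ?case using cochains_zero by (metis sum.infinite)
next
  case empty then show ?case using cochains_zero by (metis sum.empty)
next
  case (insert a F)
  then have "f a \<in> cochains Q I R n" "sum f F \<in> cochains Q I R n" by auto
  then show ?case using sum.insert[OF insert.hyps, of f] cochains_add by metis
qed

lemma dual_d_zero: "dual_d Q I n (\<lambda>_. 0) v = 0"
  unfolding dual_d_def Let_def by (simp add: sum.neutral)

lemma csum_apply: "(\<Sum>j\<in>A. csmult (lam j) (vec j)) x q = (\<Sum>j\<in>A. lam j * vec j x q)"
  by (simp add: sum_fun_app csmult_def)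

lemma hbar_apply: "(hbar w c :: ('v,'e,'k::field) cochain) (pe v) q = (if (v, q) = (w, c) then 1 else 0)"
  by (auto simp: hbar_def pe_apply pe_inj)

lemma hbar_sum_apply:
  assumes "finite {j. lam j \<noteq> 0}"
  shows "(\<Sum>j\<in>{j. lam j \<noteq> 0}. csmult (lam j) ((\<lambda>(w, c). hbar w c) j)) (pe v) q = (lam (v, q) :: 'k::field)"
proof -
  have "(\<Sum>j\<in>{j. lam j \<noteq> 0}. csmult (lam j) ((\<lambda>(w, c). hbar w c) j)) (pe v) q
      = (\<Sum>j\<in>{j. lam j \<noteq> 0}. lam j * (\<lambda>(w, c). hbar w c) j (pe v) q)" by (rule csum_apply)
  also have "\<dots> = (\<Sum>j\<in>{j. lam j \<noteq> 0}. if j = (v, q) then lam j else 0)"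
    by (rule sum.cong) (auto simp: hbar_apply split: prod.splits)
  also have "\<dots> = lam (v, q)" using assms by (simp add: sum.delta')
  finally show ?thesis .
qed

section \<open>Chains of occurrences\<close>

text \<open>occ a e abstracts "the subpath between positions a and e of a fixed path of length L lies
  in I". The cut points of a left ambiguity factorisation u_0 ... u_n form a left chain, those of a
  right factorisation w_n ... w_0, listed from the end, a right chain.\<close>

locale occurrence =
  fixes occ :: "nat \<Rightarrow> nat \<Rightarrow> bool" and L :: nat
  assumes occ_mono: "\<And>a' a d d'. a' \<le> a \<Longrightarrow> a \<le> d \<Longrightarrow> d \<le> d' \<Longrightarrow> d' \<le> L \<Longrightarrow> occ a d \<Longrightarrow> occ a' d'"
    and occ_short: "\<And>a d. d \<le> Suc a \<Longrightarrow> \<not> occ a d"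
begin

definition left_chain :: "nat \<Rightarrow> (nat \<Rightarrow> nat) \<Rightarrow> bool" where
  "left_chain n c \<longleftrightarrow> c 0 = 0 \<and> c 1 = 1 \<and> c (Suc n) = L \<and> (\<forall>j\<le>n. c j \<le> c (Suc j))
     \<and> (\<forall>j. 1 \<le> j \<and> j \<le> n \<longrightarrow> \<not> occ (c j) (c (Suc j)))
     \<and> (\<forall>j<n. occ (c j) (c (Suc (Suc j))) \<and> (\<forall>e. c (Suc j) \<le> e \<and> e < c (Suc (Suc j)) \<longrightarrow> \<not> occ (c j) e))"

definition right_chain :: "nat \<Rightarrow> (nat \<Rightarrow> nat) \<Rightarrow> bool" where
  "right_chain n d \<longleftrightarrow> d 0 = L \<and> d 1 = L - 1 \<and> d (Suc n) = 0 \<and> (\<forall>j\<le>n. d (Suc j) \<le> d j)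
     \<and> (\<forall>j. 1 \<le> j \<and> j \<le> n \<longrightarrow> \<not> occ (d (Suc j)) (d j))
     \<and> (\<forall>j<n. occ (d (Suc (Suc j))) (d j) \<and> (\<forall>s. d (Suc (Suc j)) < s \<and> s \<le> d (Suc j) \<longrightarrow> \<not> occ s (d j)))"

lemma occ_mono': "a' \<le> a \<Longrightarrow> d \<le> d' \<Longrightarrow> d' \<le> L \<Longrightarrow> occ a d \<Longrightarrow> occ a' d'"
  by (metis occ_short occ_mono le_SucI nat_le_linear)

fun rseq :: "nat \<Rightarrow> nat" where
  "rseq 0 = L"
| "rseq (Suc 0) = L - 1"
| "rseq (Suc (Suc j)) = Max {s. s \<le> rseq j \<and> occ s (rseq j)}"

declare rseq.simps(3) [simp del]

lemma left_chain_no_occ: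
  assumes lc: "left_chain n c" and j: "j \<le> n"
  shows "\<not> occ (c j) (c (Suc j))"
proof (cases j)
  case 0
  then show ?thesis using lc occ_short[where a=0 and d=1] by (simp add: left_chain_def)
next
  case (Suc j')
  then show ?thesis using lc j by (simp add: left_chain_def)
qed

lemma left_chain_mono:
  assumes lc: "left_chain n c" and "j \<le> j'" "j' \<le> Suc n"
  shows "c j \<le> c j'"
  using assms(2,3)
proof (induction j' rule: dec_induct)
  case (step i)
  then show ?case using lc by (auto simp: left_chain_def intro: le_trans)
qed simp

lemma left_chain_le_L:
  assumes lc: "left_chain n c" and "j \<le> Suc n"
  shows "c j \<le> L"
  using left_chain_mono[OF lc assms(2) order_refl] lc by (simp add: left_chain_def)

lemma left_chain_strict:
  assumes lc: "left_chain n c" and j: "j \<le> n"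
  shows "c j < c (Suc j)"
proof (cases j)
  case 0
  then show ?thesis using lc by (simp add: left_chain_def)
next
  case (Suc j')
  have "occ (c j') (c (Suc j))" using lc j Suc by (auto simp: left_chain_def)
  moreover have "\<not> occ (c j') (c j)" using left_chain_no_occ[OF lc, of j'] j Suc by simp
  moreover have "c j \<le> L" using left_chain_le_L[OF lc, of j] j by simp
  ultimately show ?thesis using occ_mono'[OF order_refl, of "c (Suc j)" "c j" "c j'"] by (meson not_le)
qed

lemma left_chain_no_occ_before:
  assumes lc: "left_chain n c" and k: "1 \<le> k" "k \<le> n" and e: "e < c (Suc k)"
  shows "\<not> occ (c (k - 1)) e"
proof (cases "c k \<le> e")
  case True
  have "k - 1 < n" "Suc (k - 1) = k" "Suc (Suc (k - 1)) = Suc k" using k by auto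
  then show ?thesis using lc True e unfolding left_chain_def by metis
next
  case False
  show ?thesis
  proof
    assume "occ (c (k - 1)) e"
    then have "occ (c (k - 1)) (c k)"
      using False occ_mono'[where a'="c (k-1)" and a="c (k-1)" and d=e and d'="c k"] left_chain_le_L[OF lc, of k] k
      by simp
    moreover have "\<not> occ (c (k - 1)) (c (Suc (k - 1)))" using left_chain_no_occ[OF lc, of "k - 1"] k by simp
    ultimately show False using k by simp
  qed
qed

lemma rseq_Suc_Suc_greatest:
  assumes "s \<le> rseq j" "occ s (rseq j)"
  shows "rseq (Suc (Suc j)) \<le> rseq j" "occ (rseq (Suc (Suc j))) (rseq j)"
    "\<And>s'. s' \<le> rseq j \<Longrightarrow> occ s' (rseq j) \<Longrightarrow> s' \<le> rseq (Suc (Suc j))"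
proof -
  let ?S = "{s. s \<le> rseq j \<and> occ s (rseq j)}"
  have fin: "finite ?S" by (rule finite_subset[of _ "{..rseq j}"]) auto
  have "Max ?S \<in> ?S" using Max_in[OF fin] assms by blast
  then show "rseq (Suc (Suc j)) \<le> rseq j" "occ (rseq (Suc (Suc j))) (rseq j)" by (simp_all add: rseq.simps(3))
  show "s' \<le> rseq (Suc (Suc j))" if "s' \<le> rseq j" "occ s' (rseq j)" for s'
    using Max_ge[OF fin] that by (simp add: rseq.simps(3))
qed

definition rseq_interlaces :: "nat \<Rightarrow> (nat \<Rightarrow> nat) \<Rightarrow> nat \<Rightarrow> bool" where
  "rseq_interlaces n c j \<longleftrightarrow> c (n + 1 - j) \<le> rseq j \<and> rseq j \<le> L \<and> \<not> occ (c (n - j)) (rseq j)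
      \<and> (1 \<le> j \<longrightarrow> rseq j < c (n + 2 - j))"

lemma rseq_occ_witness:
  assumes lc: "left_chain n c" and n: "1 \<le> n" and j: "j < n" and inv: "rseq_interlaces n c j"
  shows "c (n - 1 - j) \<le> rseq j" "occ (c (n - 1 - j)) (rseq j)"
proof -
  have y: "c (n + 1 - j) \<le> rseq j" "rseq j \<le> L" using inv by (auto simp: rseq_interlaces_def)
  have "occ (c (n - 1 - j)) (c (Suc (Suc (n - 1 - j))))" using lc j by (auto simp: left_chain_def)
  moreover have "Suc (Suc (n - 1 - j)) = n + 1 - j" using j by simp
  ultimately show "occ (c (n - 1 - j)) (rseq j)"
    using occ_mono'[where a'="c (n - 1 - j)" and d'="rseq j"] y by fastforce
  have "c (n - 1 - j) \<le> c (n + 1 - j)" using left_chain_mono[OF lc] j by simp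
  then show "c (n - 1 - j) \<le> rseq j" using y(1) by linarith
qed

lemma rseq_interlaces_step:
  assumes lc: "left_chain n c" and n: "1 \<le> n" and j: "Suc (Suc j) \<le> Suc n"
    and inv: "rseq_interlaces n c j"
  shows "rseq_interlaces n c (Suc (Suc j))"
proof -
  define k where "k = n + 1 - j"
  have k: "2 \<le> k" "k \<le> n + 1" "n - j = k - 1" "n + 1 - Suc (Suc j) = k - 2" "n + 2 - Suc (Suc j) = k - 1"
    "n + 1 - j = k" "n - Suc (Suc j) = k - 3"
    using j by (auto simp: k_def)
  let ?y = "rseq j" and ?z = "rseq (Suc (Suc j))"
  have y: "c k \<le> ?y" "?y \<le> L" "\<not> occ (c (k - 1)) ?y" using inv k by (auto simp: rseq_interlaces_def)
  have "n - 1 - j = k - 2" using k by simp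
  then have "c (k - 2) \<le> ?y" "occ (c (k - 2)) ?y" using rseq_occ_witness[OF lc n _ inv] j by auto
  then have z: "?z \<le> ?y" "occ ?z ?y" "c (k - 2) \<le> ?z" using rseq_Suc_Suc_greatest by blast+
  have hi: "?z < c (k - 1)"
  proof (rule ccontr)
    assume "\<not> ?z < c (k - 1)"
    then have "occ (c (k - 1)) ?y" using occ_mono'[where a'="c (k-1)" and a="?z" and d="?y" and d'="?y"] z y by simp
    then show False using y by simp
  qed
  have "\<not> occ (c (k - 3)) ?z"
  proof (cases "k = 2")
    case True
    then have "?z = 0" using hi lc by (simp add: left_chain_def)
    then show ?thesis using occ_short[where a="c (k-3)" and d="?z"] by simp
  next
    case False
    then have "1 \<le> k - 2" "k - 2 \<le> n" "Suc (k - 2) = k - 1" "k - 2 - 1 = k - 3" using k by auto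
    then show ?thesis using left_chain_no_occ_before[OF lc, of "k - 2" ?z] hi by simp
  qed
  moreover have "?z \<le> L" using z y by simp
  ultimately show ?thesis unfolding rseq_interlaces_def k(4,5,7) using z(3) hi by blast
qed

lemma rseq_interlaces:
  assumes lc: "left_chain n c" and n: "1 \<le> n"
  shows "j \<le> Suc n \<Longrightarrow> rseq_interlaces n c j"
proof (induction j rule: nat_less_induct)
  case (1 j)
  have cL: "c (Suc n) = L" using lc by (simp add: left_chain_def)
  consider "j = 0" | "j = 1" | j' where "j = Suc (Suc j')"
    by (cases j; cases "j - 1") auto
  then show ?case
  proof cases
    case 1
    then show ?thesis using left_chain_no_occ[OF lc, of n] cL by (simp add: rseq_interlaces_def)
  next
    case 2
    have "c n < L" using left_chain_strict[OF lc, of n] cL by simp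
    moreover have "\<not> occ (c (n - 1)) (L - 1)" using left_chain_no_occ_before[OF lc, of n "L - 1"] n cL \<open>c n < L\<close> by simp
    ultimately show ?thesis using 2 cL by (simp add: rseq_interlaces_def)
  next
    case 3
    then have "rseq_interlaces n c j'" using 1 by simp
    then show ?thesis using rseq_interlaces_step[OF lc n] 3 1(2) by simp
  qed
qed

lemma left_chain_right_chain:
  assumes lc: "left_chain n c" and n: "1 \<le> n"
  shows "right_chain n rseq"
proof -
  note inv = rseq_interlaces[OF lc n, unfolded rseq_interlaces_def]
  have dec: "rseq (Suc j) \<le> rseq j" if "j \<le> n" for j
    using inv[of "Suc j"] inv[of j] that by simp
  show ?thesis unfolding right_chain_def
  proof (intro conjI allI impI)
    show "rseq 0 = L" "rseq 1 = L - 1" by simp_all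
    show "rseq (Suc n) = 0" using inv[of "Suc n"] lc by (simp add: left_chain_def)
  next
    fix j assume "j \<le> n" then show "rseq (Suc j) \<le> rseq j" by (rule dec)
  next
    fix j assume j: "1 \<le> j \<and> j \<le> n"
    show "\<not> occ (rseq (Suc j)) (rseq j)"
    proof
      assume "occ (rseq (Suc j)) (rseq j)"
      moreover have "c (n - j) \<le> rseq (Suc j)" using inv[of "Suc j"] j by simp
      ultimately have "occ (c (n - j)) (rseq j)"
        using occ_mono'[of "c (n - j)" "rseq (Suc j)" "rseq j" "rseq j"] inv[of j] j by simp
      then show False using inv[of j] j by simp
    qed
  next
    fix j assume j: "j < n"
    have "rseq_interlaces n c j" using rseq_interlaces[OF lc n] j by simp
    then have "c (n - 1 - j) \<le> rseq j" "occ (c (n - 1 - j)) (rseq j)"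
      using rseq_occ_witness[OF lc n j] by blast+
    then have z: "occ (rseq (Suc (Suc j))) (rseq j)"
      "\<And>s'. s' \<le> rseq j \<Longrightarrow> occ s' (rseq j) \<Longrightarrow> s' \<le> rseq (Suc (Suc j))"
      using rseq_Suc_Suc_greatest by blast+
    show "occ (rseq (Suc (Suc j))) (rseq j)" by (rule z(1))
    fix s assume "rseq (Suc (Suc j)) < s \<and> s \<le> rseq (Suc j)"
    then show "\<not> occ s (rseq j)" using z(2)[of s] dec[of j] j by auto
  qed
qed

lemma right_chain_antimono:
  assumes rc: "right_chain n d" and "j \<le> j'" "j' \<le> Suc n"
  shows "d j' \<le> d j"
  using assms(2,3)
proof (induction j' rule: dec_induct)
  case (step i)
  then show ?case using rc by (auto simp: right_chain_def intro: le_trans)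
qed simp

lemma right_chain_length_pos:
  assumes rc: "right_chain n d" and n: "1 \<le> n"
  shows "1 \<le> L"
proof (rule ccontr)
  assume "\<not> 1 \<le> L"
  then have "d 0 = 0" using rc by (simp add: right_chain_def)
  moreover have "occ (d (Suc (Suc 0))) (d 0)" using rc n by (auto simp: right_chain_def)
  ultimately show False using occ_short[where a="d (Suc (Suc 0))" and d="d 0"] by simp
qed

text \<open>Reading positions backwards turns right chains into left chains.\<close>

definition mirror :: "nat \<Rightarrow> nat \<Rightarrow> bool" where
  "mirror a e \<longleftrightarrow> occ (L - e) (L - a)"

lemma occurrence_mirror: "occurrence mirror L"
proof
  fix a' a d d' assume "a' \<le> a" "a \<le> d" "d \<le> d'" "d' \<le> L" "mirror a d"
  then show "mirror a' d'" unfolding mirror_def by (intro occ_mono[of "L - d'" "L - d" "L - a" "L - a'"]) auto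
next
  fix a d :: nat assume "d \<le> Suc a"
  then show "\<not> mirror a d" unfolding mirror_def by (intro occ_short) linarith
qed

lemma right_chain_mirror_left_chain:
  assumes rc: "right_chain n d" and n: "1 \<le> n"
  shows "occurrence.left_chain mirror L n (\<lambda>j. L - d j)"
proof -
  have d: "d 0 = L" "d (Suc n) = 0" "\<forall>j\<le>n. d (Suc j) \<le> d j"
    "\<forall>j. 1 \<le> j \<and> j \<le> n \<longrightarrow> \<not> occ (d (Suc j)) (d j)"
    "\<forall>j<n. occ (d (Suc (Suc j))) (d j) \<and> (\<forall>s. d (Suc (Suc j)) < s \<and> s \<le> d (Suc j) \<longrightarrow> \<not> occ s (d j))"
    using rc by (auto simp: right_chain_def)
  have dL: "j \<le> Suc n \<Longrightarrow> d j \<le> L" for j using right_chain_antimono[OF rc, of 0 j] d(1) by simp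
  have d1: "d 1 = L - 1" "1 \<le> L" using rc right_chain_length_pos[OF rc n] by (auto simp: right_chain_def)
  have mir: "mirror (L - d j) (L - d j') \<longleftrightarrow> occ (d j') (d j)" if "j \<le> Suc n" "j' \<le> Suc n" for j j'
    using dL that by (simp add: mirror_def)
  show ?thesis unfolding occurrence.left_chain_def[OF occurrence_mirror]
  proof (intro conjI allI impI)
    show "L - d 0 = 0" "L - d 1 = 1" "L - d (Suc n) = L" using d d1 by auto
  next
    fix j assume "j \<le> n" then show "L - d j \<le> L - d (Suc j)" using d(3) by (simp add: diff_le_mono2)
  next
    fix j assume "1 \<le> j \<and> j \<le> n"
    then show "\<not> mirror (L - d j) (L - d (Suc j))" using d(4) mir by simp
  next
    fix j assume j: "j < n"
    then show "mirror (L - d j) (L - d (Suc (Suc j)))" using d(5) mir by simp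
    fix e assume e: "L - d (Suc j) \<le> e \<and> e < L - d (Suc (Suc j))"
    then have "d (Suc (Suc j)) < L - e" "L - e \<le> d (Suc j)" "e \<le> L" using dL[of "Suc j"] j by auto
    then show "\<not> mirror (L - d j) e" using d(5) dL[of j] j by (simp add: mirror_def)
  qed
qed

lemma right_chain_strict:
  assumes rc: "right_chain n d" and n: "1 \<le> n" and j: "j \<le> n"
  shows "d (Suc j) < d j"
  using occurrence.left_chain_strict[OF occurrence_mirror right_chain_mirror_left_chain[OF rc n] j] by simp

lemma right_chain_no_occ_after:
  assumes rc: "right_chain n d" and n: "1 \<le> n" and j: "j < n" and s: "d (Suc (Suc j)) < s"
  shows "\<not> occ s (d j)"
proof (cases "s \<le> L")
  case True
  then have "L - s < L - d (Suc (Suc j))" using s by simp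
  then have "\<not> mirror (L - d j) (L - s)"
    using occurrence.left_chain_no_occ_before[OF occurrence_mirror right_chain_mirror_left_chain[OF rc n], of "Suc j"] j
    by simp
  then show ?thesis using True right_chain_antimono[OF rc, of 0 j] j rc by (simp add: mirror_def right_chain_def)
next
  case False
  then show ?thesis using occ_short right_chain_antimono[OF rc, of 0 j] j rc by (simp add: right_chain_def)
qed

lemma mirror_right_chain_left_chain:
  assumes rc: "occurrence.right_chain mirror L n d" and n: "1 \<le> n"
  shows "left_chain n (\<lambda>j. L - d j)"
proof -
  interpret M: occurrence mirror L by (rule occurrence_mirror)
  have d: "d 0 = L" "d (Suc n) = 0" "\<forall>j\<le>n. d (Suc j) \<le> d j"
    "\<forall>j. 1 \<le> j \<and> j \<le> n \<longrightarrow> \<not> mirror (d (Suc j)) (d j)"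
    "\<forall>j<n. mirror (d (Suc (Suc j))) (d j) \<and> (\<forall>s. d (Suc (Suc j)) < s \<and> s \<le> d (Suc j) \<longrightarrow> \<not> mirror s (d j))"
    using rc by (auto simp: M.right_chain_def)
  have dL: "j \<le> Suc n \<Longrightarrow> d j \<le> L" for j using M.right_chain_antimono[OF rc, of 0 j] d(1) by simp
  have d1: "d 1 = L - 1" "1 \<le> L" using rc M.right_chain_length_pos[OF rc n] by (auto simp: M.right_chain_def)
  show ?thesis unfolding left_chain_def
  proof (intro conjI allI impI)
    show "L - d 0 = 0" "L - d 1 = 1" "L - d (Suc n) = L" using d d1 by auto
  next
    fix j assume "j \<le> n" then show "L - d j \<le> L - d (Suc j)" using d(3) by (simp add: diff_le_mono2)
  next
    fix j assume "1 \<le> j \<and> j \<le> n"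
    then show "\<not> occ (L - d j) (L - d (Suc j))" using d(4) by (simp add: mirror_def)
  next
    fix j assume j: "j < n"
    then show "occ (L - d j) (L - d (Suc (Suc j)))" using d(5) by (simp add: mirror_def)
    fix e assume e: "L - d (Suc j) \<le> e \<and> e < L - d (Suc (Suc j))"
    then have "d (Suc (Suc j)) < L - e" "L - e \<le> d (Suc j)" "e \<le> L" using dL[of "Suc j"] j by auto
    then have "\<not> mirror (L - e) (d j)" using d(5) j by blast
    then show "\<not> occ (L - d j) e" using \<open>e \<le> L\<close> by (simp add: mirror_def)
  qed
qed

lemma right_chain_left_chain:
  assumes rc: "right_chain n d" and n: "1 \<le> n"
  shows "\<exists>c. left_chain n c"
proof -
  interpret M: occurrence mirror L by (rule occurrence_mirror)
  have "M.right_chain n M.rseq"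
    using M.left_chain_right_chain[OF right_chain_mirror_left_chain[OF rc n] n] .
  then show ?thesis using mirror_right_chain_left_chain n by blast
qed

text \<open>Each cut point is determined by the two before it: c (j+2) is the least e \<ge> c (j+1) with
  occ (c j) e.\<close>

lemma left_chains_agree:
  assumes lc: "left_chain n c" and lc': "left_chain n' c'"
  shows "j \<le> Suc (min n n') \<Longrightarrow> c j = c' j"
proof (induction j rule: nat_less_induct)
  case (1 j)
  have c: "c 0 = 0" "c 1 = 1"
    "\<forall>j<n. occ (c j) (c (Suc (Suc j))) \<and> (\<forall>e. c (Suc j) \<le> e \<and> e < c (Suc (Suc j)) \<longrightarrow> \<not> occ (c j) e)"
    using lc by (auto simp: left_chain_def)
  have c': "c' 0 = 0" "c' 1 = 1"
    "\<forall>j<n'. occ (c' j) (c' (Suc (Suc j))) \<and> (\<forall>e. c' (Suc j) \<le> e \<and> e < c' (Suc (Suc j)) \<longrightarrow> \<not> occ (c' j) e)"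
    using lc' by (auto simp: left_chain_def)
  show ?case
  proof (cases j)
    case 0 then show ?thesis using c c' by simp
  next
    case (Suc j')
    show ?thesis
    proof (cases j')
      case 0 then show ?thesis using c c' Suc by simp
    next
      case (Suc i)
      have ji: "j = Suc (Suc i)" using Suc \<open>j = Suc j'\<close> by simp
      have e1: "c i = c' i" "c (Suc i) = c' (Suc i)" using 1 ji by auto
      have i: "i < n" "i < n'" using 1(2) ji by auto
      have m1: "c (Suc i) \<le> c (Suc (Suc i))" using lc i by (auto simp: left_chain_def)
      have m2: "c' (Suc i) \<le> c' (Suc (Suc i))" using lc' i by (auto simp: left_chain_def)
      show ?thesis
      proof (rule ccontr)
        assume ne: "c j \<noteq> c' j"
        show False
        proof (cases "c j < c' j")
          case True
          have "occ (c i) (c j)" using c(3) i ji by simp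
          moreover have "\<not> occ (c' i) (c j)" using c'(3) i ji True m1 e1 by simp
          ultimately show False using e1 by simp
        next
          case False
          then have "c' j < c j" using ne by simp
          have oc: "occ (c' i) (c' j)" using c'(3) i ji by simp
          have "c (Suc i) \<le> c' j" using m2 e1 ji by simp
          then have "\<not> occ (c i) (c' j)" using c(3) i ji \<open>c' j < c j\<close> by blast
          then show False using e1 oc by simp
        qed
      qed
    qed
  qed
qed

lemma left_chain_length_unique:
  assumes lc: "left_chain n c" and lc': "left_chain n' c'"
  shows "n = n'"
proof -
  have gen: False if lc: "left_chain n c" and lc': "left_chain n' c'" and lt: "n < n'" for n n' c c'
  proof -
    have agree: "c n = c' n" "c (Suc n) = c' (Suc n)" using left_chains_agree[OF lc lc'] lt by auto
    have cL: "c (Suc n) = L" using lc by (simp add: left_chain_def)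
    have "\<not> occ (c n) (c (Suc n))" using left_chain_no_occ[OF lc, of n] by simp
    have o: "occ (c' n) (c' (Suc (Suc n)))" using lc' lt by (simp add: left_chain_def)
    have "c' (Suc (Suc n)) \<le> c' (Suc n')" using left_chain_mono[OF lc', of "Suc (Suc n)" "Suc n'"] lt by simp
    then have "c' (Suc (Suc n)) \<le> L" using lc' by (simp add: left_chain_def)
    then have "occ (c' n) L" using occ_mono'[where a'="c' n" and a="c' n" and d="c' (Suc (Suc n))" and d'=L] o by simp
    then show False using agree cL \<open>\<not> occ (c n) (c (Suc n))\<close> by simp
  qed
  show ?thesis
  proof (rule ccontr)
    assume "n \<noteq> n'"
    then have "n < n' \<or> n' < n" by arith
    then show False using gen[OF lc lc'] gen[OF lc' lc] by blast
  qed
qed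

end

definition offset :: "('v, 'e) path list \<Rightarrow> nat \<Rightarrow> nat" where
  "offset ps j = length (concat (map snd (take j ps)))"

lemma offset_0[simp]: "offset ps 0 = 0" by (simp add: offset_def)

lemma offset_Suc: "j < length ps \<Longrightarrow> offset ps (Suc j) = offset ps j + length (snd (ps ! j))"
  by (simp add: offset_def take_Suc_conv_app_nth)

lemma offset_mono: "j < length ps \<Longrightarrow> offset ps j \<le> offset ps (Suc j)"
  by (simp add: offset_Suc)

lemma offset_mono': "j \<le> j' \<Longrightarrow> offset ps j \<le> offset ps j'"
proof -
  assume "j \<le> j'"
  then have "take j ps = take j (take j' ps)" by (simp add: min_def)
  then have "concat (map snd (take j' ps)) = concat (map snd (take j ps)) @ concat (map snd (drop j (take j' ps)))"
    by (metis append_take_drop_id concat_append map_append)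
  then show ?thesis by (simp add: offset_def)
qed

lemma offset_full: "length ps \<le> j \<Longrightarrow> offset ps j = length (concat (map snd ps))"
  by (simp add: offset_def)

lemma concat_split_nth:
  assumes "j < length ps"
  shows "concat (map snd ps) = concat (map snd (take j ps)) @ snd (ps ! j) @ concat (map snd (drop (Suc j) ps))"
proof -
  have "ps = take j ps @ ps ! j # drop (Suc j) ps" using assms by (simp add: id_take_nth_drop)
  then show ?thesis by (metis concat.simps(2) concat_append list.simps(9) map_append)
qed

lemma snd_nth_offset:
  assumes "j < length ps"
  shows "take (offset ps (Suc j) - offset ps j) (drop (offset ps j) (concat (map snd ps))) = snd (ps ! j)"
  using concat_split_nth[OF assms] assms by (simp add: offset_Suc) (simp add: offset_def)

lemma nth_eq_psub_offset:
  assumes ch: "\<forall>j. Suc j < length ps \<longrightarrow> pend Q (ps ! j) = fst (ps ! Suc j)" and ne: "ps \<noteq> []"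
  shows "j < length ps \<Longrightarrow> ps ! j = psub Q (path_concat ps) (offset ps j) (offset ps (Suc j))"
proof (induction j)
  case 0
  then show ?case using snd_nth_offset[OF 0] ne
    by (cases "ps ! 0") (simp add: psub_def path_concat_def hd_conv_nth)
next
  case (Suc j)
  then have IH: "ps ! j = psub Q (path_concat ps) (offset ps j) (offset ps (Suc j))" by simp
  have "fst (ps ! Suc j) = pend Q (ps ! j)" using ch[rule_format, OF Suc.prems] by simp
  also have "\<dots> = pvert Q (path_concat ps) (offset ps (Suc j))"
    using IH pend_psub[of "offset ps j" "offset ps (Suc j)" Q "path_concat ps"] offset_mono[of j ps] Suc by simp
  finally show ?case using snd_nth_offset[OF Suc.prems]
    by (cases "ps ! Suc j") (simp add: psub_def path_concat_def)
qed

lemma concat_psub_pieces: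
  assumes "c 0 = 0" "\<forall>i<k. c i \<le> c (Suc i)"
  shows "concat (map (\<lambda>i. take (c (Suc i) - c i) (drop (c i) xs)) [0..<k]) = take (c k) xs"
  using assms(2)
proof (induction k)
  case 0 then show ?case using assms(1) by simp
next
  case (Suc k)
  then have "c k \<le> c (Suc k)" by simp
  then show ?case using Suc by (simp add: take_append_take_drop)
qed

lemma psub_split_at:
  assumes ab: "a \<le> b" "b \<le> plen v" and xy: "snd (psub Q v a b) = xs @ ys"
  shows "a + length xs \<le> b" "(pvert Q v a, xs) = psub Q v a (a + length xs)"
    "(pvert Q v (a + length xs), ys) = psub Q v (a + length xs) b"
proof -
  have "length xs + length ys = b - a" using xy plen_psub[OF ab(2), of Q a] by (simp add: plen_def)
  then show le: "a + length xs \<le> b" using ab by linarith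
  have "xs = take (length xs) (take (b - a) (drop a (snd v)))" using xy by (simp add: snd_psub)
  also have "\<dots> = take (length xs) (drop a (snd v))" using le by (simp add: min_def)
  finally have "xs = take (length xs) (drop a (snd v))" .
  then show "(pvert Q v a, xs) = psub Q v a (a + length xs)" by (simp add: psub_def)
  have "ys = drop (length xs) (take (b - a) (drop a (snd v)))" using xy by (simp add: snd_psub)
  then show "(pvert Q v (a + length xs), ys) = psub Q v (a + length xs) b"
    using le by (simp add: psub_def drop_take add.commute)
qed

lemma path_concat_psub_cuts:
  assumes "c 0 = 0" "\<forall>i\<le>n. c i \<le> c (Suc i)" "c (Suc n) = plen v"
  shows "path_concat (map (\<lambda>i. psub Q v (c i) (c (Suc i))) [0..<Suc n]) = v"
proof -
  have "concat (map (\<lambda>i. snd (psub Q v (c i) (c (Suc i)))) [0..<Suc n]) = take (c (Suc n)) (snd v)"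
    using assms(1,2) unfolding snd_psub by (intro concat_psub_pieces) auto
  then show ?thesis using assms(1,3)
    by (cases v) (simp add: path_concat_def plen_def comp_def hd_map del: upt_Suc)
qed

lemma path_concat_rev_psub_cuts:
  assumes d: "d (Suc n) = 0" "\<forall>j\<le>n. d (Suc j) \<le> d j" "d 0 = plen v"
  shows "path_concat (rev (map (\<lambda>j. psub Q v (d (Suc j)) (d j)) [0..<Suc n])) = v"
proof -
  define c where "c = (\<lambda>i. d (Suc n - i))"
  have "rev (map (\<lambda>j. psub Q v (d (Suc j)) (d j)) [0..<Suc n]) = map (\<lambda>i. psub Q v (c i) (c (Suc i))) [0..<Suc n]"
  proof (rule nth_equalityI)
    fix i assume "i < length (rev (map (\<lambda>j. psub Q v (d (Suc j)) (d j)) [0..<Suc n]))"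
    then have i: "i \<le> n" by simp
    then have "[0..<Suc n] ! (n - i) = n - i" by (metis nth_upt add_0 le_imp_less_Suc diff_le_self)
    then show "rev (map (\<lambda>j. psub Q v (d (Suc j)) (d j)) [0..<Suc n]) ! i = map (\<lambda>i. psub Q v (c i) (c (Suc i))) [0..<Suc n] ! i"
      using i by (simp add: rev_nth c_def Suc_diff_le del: upt_Suc)
  qed simp
  moreover have "c i \<le> c (Suc i)" if "i \<le> n" for i using d(2) that by (simp add: c_def Suc_diff_le)
  then have "path_concat (map (\<lambda>i. psub Q v (c i) (c (Suc i))) [0..<Suc n]) = v"
    using d(1,3) by (intro path_concat_psub_cuts) (simp_all add: c_def)
  ultimately show ?thesis by simp
qed


section \<open>Toupie algebras\<close>

locale toupie_alg =
  fixes Q :: "('v, 'e) quiver" and v0 vw :: 'v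
    and Rmon :: "('v, 'e) path set" and br :: "nat \<Rightarrow> ('v, 'e) path"
    and m r :: nat and kk :: "nat \<Rightarrow> nat" and b :: "nat \<Rightarrow> nat \<Rightarrow> 'k::field"
    and I :: "('v, 'e, 'k) kq set"
  assumes alg: "toupie_algebra Q v0 vw Rmon br m r kk b I"
begin

abbreviation "R \<equiv> rels Rmon br m r kk b"

abbreviation "has_monomial \<equiv> contains_monomial Q Rmon"

abbreviation "\<rho> \<equiv> rho br m kk b"

lemma toupie: "toupie Q v0 vw" using alg by (simp add: toupie_algebra_def)

lemma wf: "wf_quiver Q" using toupie by (auto simp: toupie_def wf_quiver_def)

lemma finite_verts: "finite (verts Q)" and finite_arrs: "finite (arrs Q)"
  using toupie by (auto simp: toupie_def)

lemma v0_verts: "v0 \<in> verts Q" and vw_verts: "vw \<in> verts Q"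
  using toupie by (auto simp: toupie_def)

lemma no_arrow_into_source: "a \<in> arrs Q \<Longrightarrow> tgt Q a \<noteq> v0"
  using toupie unfolding toupie_def by (metis v0_verts)

lemma no_arrow_from_sink: "a \<in> arrs Q \<Longrightarrow> src Q a \<noteq> vw"
  using toupie unfolding toupie_def by (metis vw_verts)

lemma arrow_from_vertex_unique:
  assumes "a \<in> arrs Q" "a' \<in> arrs Q" "src Q a = src Q a'" "src Q a \<noteq> v0"
  shows "a = a'"
proof -
  have "src Q a \<in> verts Q - {v0, vw}" using assms wf no_arrow_from_sink by (auto simp: wf_quiver_def)
  then have "card {e\<in>arrs Q. src Q e = src Q a} = 1" using toupie by (auto simp: toupie_def)
  then obtain z where Z: "{e\<in>arrs Q. src Q e = src Q a} = {z}" by (auto simp: card_1_singleton_iff)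
  have "a \<in> {e\<in>arrs Q. src Q e = src Q a}" "a' \<in> {e\<in>arrs Q. src Q e = src Q a}" using assms by auto
  then show ?thesis unfolding Z by simp
qed

lemma arrow_into_vertex_unique:
  assumes "a \<in> arrs Q" "a' \<in> arrs Q" "tgt Q a = tgt Q a'" "tgt Q a \<noteq> vw"
  shows "a = a'"
proof -
  have "tgt Q a \<in> verts Q - {v0, vw}" using assms wf no_arrow_into_source by (auto simp: wf_quiver_def)
  then have "card {e\<in>arrs Q. tgt Q e = tgt Q a} = 1" using toupie by (auto simp: toupie_def)
  then obtain z where Z: "{e\<in>arrs Q. tgt Q e = tgt Q a} = {z}" by (auto simp: card_1_singleton_iff)
  have "a \<in> {e\<in>arrs Q. tgt Q e = tgt Q a}" "a' \<in> {e\<in>arrs Q. tgt Q e = tgt Q a}" using assms by auto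
  then show ?thesis unfolding Z by simp
qed

lemma br_bij: "bij_betw br {..<m} {p. is_branch Q v0 vw p}"
  using alg by (simp add: toupie_algebra_def)

lemma br_inj: "i < m \<Longrightarrow> j < m \<Longrightarrow> br i = br j \<longleftrightarrow> i = j"
  using br_bij by (auto simp: bij_betw_def inj_on_def)

lemma br_branch: "j < m \<Longrightarrow> is_branch Q v0 vw (br j)"
  using br_bij by (auto simp: bij_betw_def)

lemma br_path: "j < m \<Longrightarrow> is_path Q (br j)" and br_fst: "j < m \<Longrightarrow> fst (br j) = v0"
  and br_pend: "j < m \<Longrightarrow> pend Q (br j) = vw"
  using br_branch by (auto simp: is_branch_def)

lemma branch_is_br: "is_path Q p \<Longrightarrow> fst p = v0 \<Longrightarrow> pend Q p = vw \<Longrightarrow> \<exists>j<m. p = br j"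
  using br_bij unfolding bij_betw_def is_branch_def by (metis (mono_tags, lifting) imageE lessThan_iff mem_Collect_eq)

lemma kk_lt: "i < r \<Longrightarrow> kk i < m" using alg by (simp add: toupie_algebra_def)

lemma kk_mono: "strict_mono_on {..<r} kk" using alg by (simp add: toupie_algebra_def)

lemma kk_inj: "i < r \<Longrightarrow> l < r \<Longrightarrow> kk i = kk l \<longleftrightarrow> i = l"
  using kk_mono by (metis lessThan_iff strict_mono_on_eqD)

lemma b_pivot: "i < r \<Longrightarrow> l < r \<Longrightarrow> l \<noteq> i \<Longrightarrow> b i (kk l) = 0"
  using alg by (simp add: toupie_algebra_def)

lemma b_tail_nonzero: "i < r \<Longrightarrow> \<exists>j. kk i < j \<and> j < m \<and> b i j \<noteq> 0"
  using alg by (simp add: toupie_algebra_def)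

lemma rho_branch_monomial_free: "i < r \<Longrightarrow> j < m \<Longrightarrow> j = kk i \<or> (kk i < j \<and> b i j \<noteq> 0) \<Longrightarrow> \<not> has_monomial (br j)"
  using alg unfolding toupie_algebra_def by blast

lemma I_eq_ideal_gen: "I = ideal_gen Q R" using alg by (simp add: toupie_algebra_def)

lemma admissible: "admissible Q I" using alg unfolding toupie_algebra_def by blast

lemma ideal_support_length: "x \<in> I \<Longrightarrow> x p \<noteq> 0 \<Longrightarrow> 2 \<le> plen p"
  using admissible unfolding admissible_def by blast

lemma Rmon_path: "q \<in> Rmon \<Longrightarrow> is_path Q q"
  using alg by (simp add: toupie_algebra_def)

lemma Rmon_div: "q \<in> Rmon \<Longrightarrow> \<exists>j<m. path_divides Q q (br j)"
  using alg by (simp add: toupie_algebra_def)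

lemma rho_apply:
  "\<rho> i q = (if q = br (kk i) then 1 else 0) + (\<Sum>j\<in>{kk i<..<m}. b i j * (if q = br j then 1 else 0))"
  by (simp add: rho_def sum_fun_app ksmult_apply pe_apply)

lemma rho_support: "i < r \<Longrightarrow> \<rho> i q \<noteq> 0 \<Longrightarrow> \<exists>j<m. q = br j \<and> (j = kk i \<or> (kk i < j \<and> b i j \<noteq> 0))"
proof (rule ccontr)
  assume i: "i < r" and nz: "\<rho> i q \<noteq> 0" and no: "\<not> (\<exists>j<m. q = br j \<and> (j = kk i \<or> (kk i < j \<and> b i j \<noteq> 0)))"
  have "q \<noteq> br (kk i)" using no kk_lt[OF i] by auto
  moreover have "b i j * (if q = br j then 1 else 0) = 0" if "j \<in> {kk i<..<m}" for j
    using no that by auto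
  ultimately have "\<rho> i q = 0" unfolding rho_apply by (simp add: sum.neutral)
  then show False using nz by simp
qed

lemma rho_support_branch: "i < r \<Longrightarrow> \<rho> i q \<noteq> 0 \<Longrightarrow> is_path Q q \<and> fst q = v0 \<and> pend Q q = vw \<and> \<not> has_monomial q"
  using rho_support[of i q] br_path br_fst br_pend rho_branch_monomial_free by blast

lemma rho_pivot: "i < r \<Longrightarrow> l < r \<Longrightarrow> \<rho> i (br (kk l)) = (if i = l then 1 else 0)"
proof -
  assume i: "i < r" and l: "l < r"
  have "(\<Sum>j\<in>{kk i<..<m}. b i j * (if br (kk l) = br j then 1 else 0)) = 0"
  proof (rule sum.neutral, intro ballI)
    fix j assume j: "j \<in> {kk i<..<m}"
    show "b i j * (if br (kk l) = br j then 1 else 0) = 0"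
    proof (cases "j = kk l")
      case True
      then have "l \<noteq> i" using j by auto
      then show ?thesis using b_pivot[OF i l] True by simp
    next
      case False then show ?thesis using br_inj[of "kk l" j] kk_lt[OF l] j by auto
    qed
  qed
  moreover have "(br (kk l) = br (kk i)) = (i = l)" using br_inj kk_lt kk_inj i l by metis
  ultimately show ?thesis by (simp add: rho_apply)
qed

lemma rho_branch: "i < r \<Longrightarrow> j < m \<Longrightarrow> \<rho> i (br j) = (if j = kk i then 1 else if kk i < j then b i j else 0)"
proof -
  assume i: "i < r" and j: "j < m"
  have "(\<Sum>j'\<in>{kk i<..<m}. b i j' * (if br j = br j' then 1 else 0)) = (if kk i < j then b i j else 0)"
  proof -
    have "(\<Sum>j'\<in>{kk i<..<m}. b i j' * (if br j = br j' then 1 else 0)) = (\<Sum>j'\<in>{kk i<..<m}. (if j' = j then b i j else 0))"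
      by (rule sum.cong[OF refl]) (use j br_inj in auto)
    also have "\<dots> = (if kk i < j then b i j else 0)" using j by (simp add: sum.delta')
    finally show ?thesis .
  qed
  then show ?thesis using br_inj[OF j kk_lt[OF i]] by (auto simp: rho_apply)
qed

lemma pvert_neq_source:
  assumes "is_path Q p" "0 < k" "k \<le> plen p"
  shows "pvert Q p k \<noteq> v0"
proof -
  obtain j where j: "k = Suc j" using assms by (cases k) auto
  have "snd p ! j \<in> arrs Q" using assms j by (auto simp: is_path_def plen_def)
  then show ?thesis using pvert_Suc[of j p Q] assms j no_arrow_into_source by (auto simp: plen_def)
qed

lemma pvert_neq_sink:
  assumes "is_path Q p" "k < plen p"
  shows "pvert Q p k \<noteq> vw"
proof -
  have "snd p ! k \<in> arrs Q" using assms by (auto simp: is_path_def plen_def)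
  then show ?thesis using src_nth_pvert[of Q p k] assms no_arrow_from_sink by (auto simp: plen_def)
qed

lemma pend_neq_source: "is_path Q (a, zs) \<Longrightarrow> zs \<noteq> [] \<Longrightarrow> pend Q (a, zs) \<noteq> v0"
proof -
  assume h: "is_path Q (a, zs)" "zs \<noteq> []"
  then have "last zs \<in> arrs Q" by (auto simp: is_path_def)
  then show ?thesis using no_arrow_into_source h(2) by (simp add: pend_def)
qed

lemma path_src_hd: "is_path Q (a, xs) \<Longrightarrow> xs \<noteq> [] \<Longrightarrow> src Q (hd xs) = a"
  by (auto simp: is_path_def)

lemma paths_same_end_suffix:
  assumes "is_path Q (a, xs)" "is_path Q (bv, ys)" "pend Q (a, xs) = pend Q (bv, ys)" "pend Q (a, xs) \<noteq> vw"
    "length xs \<le> length ys"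
  shows "\<exists>zs. ys = zs @ xs"
  using assms
proof (induction xs arbitrary: ys rule: rev_induct)
  case Nil then show ?case by simp
next
  case (snoc x xs)
  obtain ys' y where ys: "ys = ys' @ [y]" using snoc.prems(5) by (cases ys rule: rev_exhaust) auto
  have px: "is_path Q (a, xs)" "is_path Q (pend Q (a, xs), [x])" using snoc.prems(1) by (simp_all add: is_path_append[OF wf])
  have py: "is_path Q (bv, ys')" "is_path Q (pend Q (bv, ys'), [y])" using snoc.prems(2) ys by (simp_all add: is_path_append[OF wf])
  have x: "x \<in> arrs Q" "src Q x = pend Q (a, xs)" using px(2) by (simp_all add: is_path_Cons[OF wf])
  have y: "y \<in> arrs Q" "src Q y = pend Q (bv, ys')" using py(2) by (simp_all add: is_path_Cons[OF wf])
  have t: "tgt Q x = tgt Q y" using snoc.prems(3) ys by (simp add: pend_append)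
  have "tgt Q x \<noteq> vw" using snoc.prems(4) by (simp add: pend_append)
  then have xy: "x = y" using arrow_into_vertex_unique[OF x(1) y(1) t] by simp
  have "pend Q (a, xs) \<noteq> vw" using x no_arrow_from_sink by metis
  moreover have "pend Q (a, xs) = pend Q (bv, ys')" using x y xy by simp
  ultimately obtain zs where "ys' = zs @ xs" using snoc.IH[OF px(1) py(1)] snoc.prems(5) ys by auto
  then show ?case using ys xy by simp
qed

lemma paths_same_start_prefix:
  assumes "is_path Q (a, xs)" "is_path Q (a, ys)" "a \<noteq> v0" "length xs \<le> length ys"
  shows "xs = take (length xs) ys"
  using assms
proof (induction xs arbitrary: a ys)
  case Nil then show ?case by simp
next
  case (Cons x xs)
  obtain y ys' where ys: "ys = y # ys'" using Cons.prems(4) by (cases ys) auto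
  have x: "x \<in> arrs Q" "src Q x = a" "is_path Q (tgt Q x, xs)" using Cons.prems(1) by (simp_all add: is_path_Cons[OF wf])
  have y: "y \<in> arrs Q" "src Q y = a" "is_path Q (tgt Q y, ys')" using Cons.prems(2) ys by (simp_all add: is_path_Cons[OF wf])
  have xy: "x = y" using arrow_from_vertex_unique[OF x(1) y(1)] x y Cons.prems(3) by simp
  have "tgt Q x \<noteq> v0" using no_arrow_into_source x by simp
  then show ?case using Cons.IH[OF x(3)] y(3) xy ys Cons.prems(4) by simp
qed

lemma path_from_source_suffix:
  assumes r: "is_path Q (v0, rs)" and p: "is_path Q (a, xs)" and e: "pend Q (a, xs) = pend Q (v0, rs)"
    and nw: "pend Q (v0, rs) \<noteq> vw"
  shows "\<exists>zs. rs = zs @ xs \<and> pend Q (v0, zs) = a \<and> is_path Q (v0, zs)"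
proof (cases "length xs \<le> length rs")
  case True
  then obtain zs where zs: "rs = zs @ xs" using paths_same_end_suffix[OF p r e] nw e by auto
  have pz: "is_path Q (v0, zs)" "is_path Q (pend Q (v0, zs), xs)" using r zs by (simp_all add: is_path_append[OF wf])
  have "pend Q (v0, zs) = a"
  proof (cases "xs = []")
    case True then show ?thesis using e zs by simp
  next
    case False then show ?thesis using path_src_hd[OF pz(2)] path_src_hd[OF p] by simp
  qed
  then show ?thesis using zs pz by blast
next
  case False
  then obtain zs where zs: "xs = zs @ rs" using paths_same_end_suffix[OF r p e[symmetric]] nw e by fastforce
  have zne: "zs \<noteq> []" using False zs by auto
  have pz: "is_path Q (a, zs)" "is_path Q (pend Q (a, zs), rs)" using p zs by (simp_all add: is_path_append[OF wf])
  have "pend Q (a, zs) = v0"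
  proof (cases "rs = []")
    case True then show ?thesis using e zs by simp
  next
    case False then show ?thesis using path_src_hd[OF pz(2)] path_src_hd[OF r] by simp
  qed
  then show ?thesis using pend_neq_source[OF pz(1) zne] by simp
qed

lemma path_to_sink_unique:
  assumes "is_path Q p" "is_path Q p'" "fst p = fst p'" "pend Q p = vw" "pend Q p' = vw" "fst p \<noteq> v0"
  shows "p = p'"
proof -
  obtain a xs ys where p: "p = (a, xs)" "p' = (a, ys)" using assms(3) by (cases p, cases p') auto
  have gen: "xs = ys" if h: "is_path Q (a, xs)" "is_path Q (a, ys)" "pend Q (a, xs) = vw" "pend Q (a, ys) = vw"
      "a \<noteq> v0" "length xs \<le> length ys" for xs ys
  proof -
    have t: "xs = take (length xs) ys" using paths_same_start_prefix[OF h(1,2,5,6)] .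
    define e where "e = drop (length xs) ys"
    have ys: "ys = xs @ e" using t by (metis append_take_drop_id e_def)
    have pe: "is_path Q (vw, e)" using h(2) ys h(3) by (simp add: is_path_append[OF wf])
    have "e = []"
    proof (rule ccontr)
      assume "e \<noteq> []"
      then have "src Q (hd e) = vw" "hd e \<in> arrs Q" using pe by (auto simp: is_path_def)
      then show False using no_arrow_from_sink by simp
    qed
    then show ?thesis using ys by simp
  qed
  show ?thesis using assms p gen[of xs ys] gen[of ys xs] by (cases "length xs \<le> length ys") auto
qed

lemma reachable_path_unique:
  assumes "is_path Q p" "is_path Q p'" "fst p = fst p'" "pend Q p = pend Q p'" "pend Q p \<noteq> vw"
    and R: "is_path Q (v0, rs)" "pend Q (v0, rs) = fst p"
  shows "p = p'"
proof -
  obtain a xs ys where p: "p = (a, xs)" "p' = (a, ys)" using assms(3) by (cases p, cases p') auto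
  have q1: "is_path Q (v0, rs @ xs)" using R assms(1) p by (simp add: is_path_append[OF wf])
  have q2: "is_path Q (v0, rs @ ys)" using R assms(2) p by (simp add: is_path_append[OF wf])
  have e: "pend Q (v0, rs @ xs) = pend Q (v0, rs @ ys)" using assms(4) p R by (simp add: pend_append)
  have nw: "pend Q (v0, rs @ ys) \<noteq> vw" using assms(4,5) p R by (simp add: pend_append)
  obtain zs where zs: "rs @ ys = zs @ (rs @ xs)" "pend Q (v0, zs) = v0" "is_path Q (v0, zs)"
    using path_from_source_suffix[OF q2 q1 e nw] by blast
  have "zs = []" using zs(2,3) pend_neq_source by blast
  then show ?thesis using zs(1) p by simp
qed

lemma path_from_source_unique:
  assumes "is_path Q p" "is_path Q p'" "fst p = v0" "fst p' = v0" "pend Q p = pend Q p'" "pend Q p \<noteq> vw"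
  shows "p = p'"
  using reachable_path_unique[OF assms(1,2) _ assms(5,6), of "[]"] assms v0_verts by simp

lemma psub_branch_endpoints:
  assumes v: "is_path Q v" and ac: "a \<le> c" "c \<le> plen v"
    and f: "fst (psub Q v a c) = v0" and p: "pend Q (psub Q v a c) = vw"
  shows "a = 0" "c = plen v"
proof -
  show a: "a = 0" using pvert_neq_source[OF v, of a] ac f by (cases "a = 0") auto
  show "c = plen v" using pvert_neq_sink[OF v, of c] ac p by (cases "c = plen v") (auto simp: pend_psub)
qed

section \<open>The ideal\<close>

lemma has_monomial_psub: "has_monomial (psub Q p s e) \<Longrightarrow> s \<le> e \<Longrightarrow> e \<le> plen p \<Longrightarrow> has_monomial p"
  unfolding contains_monomial_def using path_divides_psub by blast

lemma has_monomial_self: "q \<in> Rmon \<Longrightarrow> has_monomial q"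
  unfolding contains_monomial_def path_divides_def
  by (rule bexI[of _ q]) (auto intro: exI[of _ "[]"])

lemma rho_comb_outside_branches:
  assumes "\<not> (is_path Q q \<and> fst q = v0 \<and> pend Q q = vw)"
  shows "(\<Sum>l<r. c l * \<rho> l q) = 0"
proof (intro sum.neutral ballI)
  fix l assume "l \<in> {..<r}"
  then show "c l * \<rho> l q = 0" using assms rho_support_branch[of l q] by auto
qed

text \<open>The rho_i are supported on branches, which start at the source and end at the sink, so only
  the trivial-path coefficient of a at the source (resp. sink) survives in a x (resp. x a).\<close>

lemma rho_comb_kmult_left:
  assumes c: "\<And>p. \<not> has_monomial p \<Longrightarrow> x p = (\<Sum>l<r. c l * \<rho> l p)" and np: "\<not> has_monomial p"
  shows "kmult Q a x p = (\<Sum>l<r. a (v0, []) * c l * \<rho> l p)"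
proof (cases "is_path Q p")
  case False
  then show ?thesis using rho_comb_outside_branches[of p] by (simp add: kmult_def)
next
  case True
  have "a (fst p, take k (snd p)) * x (pend Q (fst p, take k (snd p)), drop k (snd p))
     = (if k = 0 then a (fst p, []) * x p else 0)" if k: "k \<in> {0..length (snd p)}" for k
  proof (cases "k = 0")
    case False
    let ?s = "psub Q p k (plen p)"
    have "\<not> has_monomial ?s" using np has_monomial_psub[of p k "plen p"] k by (auto simp: plen_def)
    moreover have "fst ?s \<noteq> v0" using pvert_neq_source[OF True, of k] False k by (auto simp: plen_def)
    ultimately have "x ?s = 0" using c rho_comb_outside_branches by simp
    then show ?thesis using False suffix_eq_psub[where p=p and k=k] by simp
  qed simp
  then have "kmult Q a x p = a (fst p, []) * x p"
    using True by (simp add: kmult_def sum.delta)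
  also have "\<dots> = a (v0, []) * (\<Sum>l<r. c l * \<rho> l p)"
    using c[OF np] rho_comb_outside_branches[of p c] True by (cases "fst p = v0") auto
  finally show ?thesis by (simp add: sum_distrib_left mult.assoc)
qed

lemma rho_comb_kmult_right:
  assumes c: "\<And>p. \<not> has_monomial p \<Longrightarrow> x p = (\<Sum>l<r. c l * \<rho> l p)" and np: "\<not> has_monomial p"
  shows "kmult Q x a p = (\<Sum>l<r. a (vw, []) * c l * \<rho> l p)"
proof (cases "is_path Q p")
  case False
  then show ?thesis using rho_comb_outside_branches[of p] by (simp add: kmult_def)
next
  case True
  have "x (fst p, take k (snd p)) * a (pend Q (fst p, take k (snd p)), drop k (snd p))
     = (if k = length (snd p) then x p * a (pend Q p, []) else 0)" if k: "k \<in> {0..length (snd p)}" for k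
  proof (cases "k = length (snd p)")
    case False
    let ?s = "psub Q p 0 k"
    have "\<not> has_monomial ?s" using np has_monomial_psub[of p 0 k] k by (auto simp: plen_def)
    moreover have "pend Q ?s \<noteq> vw" using pvert_neq_sink[OF True, of k] False k by (auto simp: plen_def pend_psub)
    ultimately have "x ?s = 0" using c rho_comb_outside_branches by simp
    then show ?thesis using False prefix_eq_psub[where p=p and k=k] by simp
  qed (simp add: pend_def)
  then have "kmult Q x a p = x p * a (pend Q p, [])"
    using True by (simp add: kmult_def sum.delta)
  also have "\<dots> = a (vw, []) * (\<Sum>l<r. c l * \<rho> l p)"
    using c[OF np] rho_comb_outside_branches[of p c] True by (cases "pend Q p = vw") auto
  finally show ?thesis by (simp add: sum_distrib_left mult.assoc)
qed

lemma ideal_rho_combination: "x \<in> I \<Longrightarrow> \<exists>c. \<forall>p. \<not> has_monomial p \<longrightarrow> x p = (\<Sum>l<r. c l * \<rho> l p)"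
  unfolding I_eq_ideal_gen
proof (induction rule: ideal_gen.induct)
  case (gen x)
  then consider q where "q \<in> Rmon" "x = pe q" | i where "i < r" "x = \<rho> i"
    by (auto simp: rels_def)
  then show ?case
  proof cases
    case 1
    then show ?thesis using has_monomial_self by (intro exI[of _ "\<lambda>_. 0"]) (auto simp: pe_apply)
  next
    case 2
    show ?thesis
    proof (intro exI[of _ "\<lambda>l. if l = i then 1 else 0"] allI impI)
      fix p
      have "(\<Sum>l<r. (if l = i then 1 else 0) * \<rho> l p) = (\<Sum>l<r. if l = i then \<rho> l p else 0)"
        by (rule sum.cong) auto
      then show "x p = (\<Sum>l<r. (if l = i then 1 else 0) * \<rho> l p)" using 2 by simp
    qed
  qed
next
  case zero
  then show ?case by (intro exI[of _ "\<lambda>_. 0"]) simp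
next
  case (add x y)
  then obtain c1 c2 where "\<forall>p. \<not> has_monomial p \<longrightarrow> x p = (\<Sum>l<r. c1 l * \<rho> l p)"
      "\<forall>p. \<not> has_monomial p \<longrightarrow> y p = (\<Sum>l<r. c2 l * \<rho> l p)" by blast
  then show ?case
    by (intro exI[of _ "\<lambda>l. c1 l + c2 l"]) (simp add: distrib_right sum.distrib)
next
  case (lmult x a)
  then obtain c where "\<forall>p. \<not> has_monomial p \<longrightarrow> x p = (\<Sum>l<r. c l * \<rho> l p)" by blast
  then show ?case using rho_comb_kmult_left by (intro exI[of _ "\<lambda>l. a (v0, []) * c l"]) blast
next
  case (rmult x a)
  then obtain c where "\<forall>p. \<not> has_monomial p \<longrightarrow> x p = (\<Sum>l<r. c l * \<rho> l p)" by blast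
  then show ?case using rho_comb_kmult_right by (intro exI[of _ "\<lambda>l. a (vw, []) * c l"]) blast
qed

lemma ideal_support_paths: "x \<in> I \<Longrightarrow> x p \<noteq> 0 \<Longrightarrow> is_path Q p"
  unfolding I_eq_ideal_gen
proof (induction arbitrary: p rule: ideal_gen.induct)
  case (gen x)
  then consider q where "q \<in> Rmon" "x = pe q" | i where "i < r" "x = \<rho> i"
    by (auto simp: rels_def)
  then show ?case
    using gen Rmon_path rho_support_branch by cases (auto simp: pe_apply split: if_splits)
next
  case (add x y) then show ?case by (cases "x p = 0") auto
qed (auto simp: kmult_def split: if_splits)

lemma I_zero: "0 \<in> I" and I_add: "x \<in> I \<Longrightarrow> y \<in> I \<Longrightarrow> x + y \<in> I"
  and I_lmult: "x \<in> I \<Longrightarrow> in_kQ Q a \<Longrightarrow> kmult Q a x \<in> I"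
  and I_rmult: "x \<in> I \<Longrightarrow> in_kQ Q a \<Longrightarrow> kmult Q x a \<in> I"
  unfolding I_eq_ideal_gen by (auto intro: ideal_gen.intros)

definition unit_kQ :: "('v, 'e, 'k) kq" where
  "unit_kQ = (\<lambda>p. if snd p = [] \<and> fst p \<in> verts Q then 1 else 0)"

lemma in_kQ_smult_unit: "in_kQ Q (ksmult c unit_kQ)"
proof -
  have "{p. ksmult c unit_kQ p \<noteq> 0} \<subseteq> (\<lambda>v. (v, [])) ` verts Q"
    by (auto simp: ksmult_def unit_kQ_def split: if_splits)
  then have "finite {p. ksmult c unit_kQ p \<noteq> 0}" using finite_verts finite_subset by blast
  moreover have "\<forall>p. ksmult c unit_kQ p \<noteq> 0 \<longrightarrow> is_path Q p"
    by (auto simp: ksmult_def unit_kQ_def is_path_def split: if_splits)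
  ultimately show ?thesis by (simp add: in_kQ_def)
qed

lemma kmult_unit_left: 
  assumes "\<And>p. x p \<noteq> 0 \<Longrightarrow> is_path Q p"
  shows "kmult Q unit_kQ x = x"
proof (rule ext)
  fix p
  show "kmult Q unit_kQ x p = x p"
  proof (cases "is_path Q p")
    case False then show ?thesis using assms[of p] by (auto simp: kmult_def)
  next
    case True
    have trm: "unit_kQ (fst p, take k (snd p)) * x (pend Q (fst p, take k (snd p)), drop k (snd p))
      = (if k = 0 then x p else 0)" if "k \<in> {0..length (snd p)}" for k
      using that True by (auto simp: unit_kQ_def is_path_def)
    have "kmult Q unit_kQ x p = (\<Sum>k\<in>{0..length (snd p)}. (if k = 0 then x p else 0))"
      using True by (simp add: kmult_def trm)
    also have "\<dots> = x p" by (simp add: sum.delta)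
    finally show ?thesis .
  qed
qed

lemma I_smult: "x \<in> I \<Longrightarrow> ksmult c x \<in> I"
proof -
  assume x: "x \<in> I"
  have "kmult Q (ksmult c unit_kQ) x = ksmult c x"
    using kmult_unit_left[of x] ideal_support_paths[OF x] by (simp add: kmult_smult_left)
  then show ?thesis using I_lmult[OF x in_kQ_smult_unit[of c]] by simp
qed

lemma I_uminus: "x \<in> I \<Longrightarrow> - x \<in> I"
  using I_smult[of x "-1"] by (simp add: ksmult_def fun_Compl_def)

lemma I_diff: "x \<in> I \<Longrightarrow> y \<in> I \<Longrightarrow> x - y \<in> I"
  using I_add[OF _ I_uminus] by (metis diff_conv_add_uminus)

lemma I_sum: "(\<And>a. a \<in> A \<Longrightarrow> f a \<in> I) \<Longrightarrow> sum f A \<in> I"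
proof (induction A rule: infinite_finite_induct)
  case (infinite A) then show ?case by (metis I_zero sum.infinite)
next
  case empty then show ?case by (metis I_zero sum.empty)
next
  case (insert a F)
  then have "f a \<in> I" "sum f F \<in> I" by auto
  then show ?case using sum.insert[OF insert.hyps, of f] I_add by metis
qed

lemma ideal_psub_mono:
  assumes p: "is_path Q p" and le: "a' \<le> a" "a \<le> d" "d \<le> d'" "d' \<le> plen p"
    and I: "pe (psub Q p a d) \<in> I"
  shows "pe (psub Q p a' d') \<in> I"
proof -
  have "kmult Q (pe (psub Q p a' a)) (pe (psub Q p a d)) = pe (pcomp (psub Q p a' a) (psub Q p a d))"
    using le by (intro kmult_pe_pe wf is_path_psub p) (auto simp: pend_psub)
  also have "\<dots> = pe (psub Q p a' d)" using le by (simp add: pcomp_psub)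
  finally have 1: "pe (psub Q p a' d) \<in> I"
    using I_lmult[OF I in_kQ_pe[OF is_path_psub[OF wf p]]] le by (metis le_trans)
  have "kmult Q (pe (psub Q p a' d)) (pe (psub Q p d d')) = pe (pcomp (psub Q p a' d) (psub Q p d d'))"
    using le by (intro kmult_pe_pe wf is_path_psub p) (auto simp: pend_psub)
  also have "\<dots> = pe (psub Q p a' d')" using le by (simp add: pcomp_psub)
  finally show ?thesis
    using I_rmult[OF 1 in_kQ_pe[OF is_path_psub[OF wf p]]] le by (metis le_trans)
qed

lemma path_divides_eq_psub:
  assumes "snd p = xs @ snd q @ ys" "fst q = pend Q (fst p, xs)"
  shows "q = psub Q p (length xs) (length xs + length (snd q))"
  using assms by (cases q) (simp add: psub_def pvert_def)

lemma pe_in_I_if_monomial: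
  assumes p: "is_path Q p" and mn: "has_monomial p"
  shows "pe p \<in> I"
proof -
  obtain q xs ys where q: "q \<in> Rmon" "snd p = xs @ snd q @ ys" "fst q = pend Q (fst p, xs)"
    using mn by (auto simp: contains_monomial_def path_divides_def)
  have "pe q \<in> I" using q(1) unfolding I_eq_ideal_gen by (auto intro: ideal_gen.gen simp: rels_def)
  then have "pe (psub Q p (length xs) (length xs + length (snd q))) \<in> I"
    using path_divides_eq_psub[OF q(2,3)] by simp
  then have "pe (psub Q p 0 (plen p)) \<in> I"
    by (rule ideal_psub_mono[OF p, rotated -1]) (use q(2) in \<open>auto simp: plen_def\<close>)
  then show ?thesis by (simp add: psub_full)
qed

lemma monomial_if_pe_in_I:
  assumes p: "is_path Q p" and I: "pe p \<in> I"
  shows "has_monomial p"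
proof (rule ccontr)
  assume np: "\<not> has_monomial p"
  obtain c where c: "\<And>q. \<not> has_monomial q \<Longrightarrow> pe p q = (\<Sum>l<r. c l * \<rho> l q)" using ideal_rho_combination[OF I] by blast
  have "(\<Sum>l<r. c l * \<rho> l p) = 1" using c[OF np] by (simp add: pe_apply)
  then obtain l where l: "l < r" "\<rho> l p \<noteq> 0" by (metis (no_types, lifting) lessThan_iff mult_zero_right one_neq_zero sum.neutral)
  then obtain j where j: "j < m" "p = br j" using rho_support by blast
  have cl: "c l' = (if j = kk l' then 1 else 0)" if l': "l' < r" for l'
  proof -
    have nm: "\<not> has_monomial (br (kk l'))" using rho_branch_monomial_free[OF l' kk_lt[OF l']] by simp
    have "pe p (br (kk l')) = (\<Sum>l<r. c l * \<rho> l (br (kk l')))" using c[OF nm] .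
    also have "\<dots> = (\<Sum>l<r. if l = l' then c l else 0)"
      by (rule sum.cong) (use l' rho_pivot in auto)
    also have "\<dots> = c l'" using l' by (simp add: sum.delta)
    finally show ?thesis using j br_inj[OF j(1) kk_lt[OF l']] by (auto simp: pe_apply)
  qed
  show False
  proof (cases "\<exists>l0<r. j = kk l0")
    case True
    then obtain l0 where l0: "l0 < r" "j = kk l0" by blast
    obtain j' where j': "kk l0 < j'" "j' < m" "b l0 j' \<noteq> 0" using b_tail_nonzero[OF l0(1)] by blast
    have nm: "\<not> has_monomial (br j')" using rho_branch_monomial_free[OF l0(1) j'(2)] j' by simp
    have "pe p (br j') = 0" using j j' l0 br_inj by (auto simp: pe_apply)
    moreover have "(\<Sum>l<r. c l * \<rho> l (br j')) = (\<Sum>l<r. if l = l0 then b l0 j' else 0)"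
    proof (rule sum.cong[OF refl])
      fix l assume "l \<in> {..<r}"
      then show "c l * \<rho> l (br j') = (if l = l0 then b l0 j' else 0)"
        using cl[of l] l0 kk_inj[of l l0] rho_branch[of l0 j'] j' by auto
    qed
    moreover have "(\<Sum>l<r. (if l = l0 then b l0 j' else 0)) = b l0 j'" using l0 by (simp add: sum.delta)
    ultimately have "b l0 j' = 0" using c[OF nm] by metis
    then show False using j'(3) by simp
  next
    case False
    then have "\<forall>l'<r. c l' = 0" using cl by auto
    then show False using c[OF np] by (simp add: pe_apply)
  qed
qed

lemma B0w_iff: "q \<in> B0w Q Rmon br m r kk \<longleftrightarrow> (\<exists>j. q = br j \<and> j < m \<and> \<not> has_monomial (br j) \<and> j \<notin> kk ` {..<r})"
  by (auto simp: B0w_def)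

lemma ideal_vanishes_on_B0w:
  assumes x: "x \<in> I" and supp: "\<And>q. x q \<noteq> 0 \<Longrightarrow> q \<in> B0w Q Rmon br m r kk"
  shows "x = 0"
proof (rule ext)
  fix q
  obtain c where c: "\<And>q. \<not> has_monomial q \<Longrightarrow> x q = (\<Sum>l<r. c l * \<rho> l q)" using ideal_rho_combination[OF x] by blast
  have cz: "c l = 0" if l: "l < r" for l
  proof -
    have nm: "\<not> has_monomial (br (kk l))" using rho_branch_monomial_free[OF l kk_lt[OF l]] by simp
    have "br (kk l) \<notin> B0w Q Rmon br m r kk"
      using l kk_lt[OF l] br_inj by (auto simp: B0w_iff)
    then have "x (br (kk l)) = 0" using supp by blast
    moreover have "x (br (kk l)) = (\<Sum>l'<r. c l' * \<rho> l' (br (kk l)))" using c[OF nm] .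
    moreover have "\<dots> = (\<Sum>l'<r. if l' = l then c l else 0)"
      by (rule sum.cong) (use l rho_pivot in auto)
    ultimately show ?thesis using l by (simp add: sum.delta)
  qed
  show "x q = 0 q"
  proof (cases "has_monomial q")
    case True
    then have "q \<notin> B0w Q Rmon br m r kk" by (auto simp: B0w_iff)
    then show ?thesis using supp[of q] by auto
  next
    case False then show ?thesis using c[OF False] cz by simp
  qed
qed

lemma branch_element_coeff:
  assumes ik: "in_kQ Q x" and sp: "supp_in Q x v0 vw"
    and q: "q \<notin> B0w Q Rmon br m r kk" "\<not> has_monomial q"
  shows "x q = (\<Sum>l<r. x (br (kk l)) * \<rho> l q)"
proof (cases "\<exists>j<m. q = br j")
  case True
  then obtain j where j: "j < m" "q = br j" by blast
  then have "j \<in> kk ` {..<r}" using q by (auto simp: B0w_iff)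
  then obtain l0 where l0: "l0 < r" "j = kk l0" by auto
  have "(\<Sum>l<r. x (br (kk l)) * \<rho> l q) = (\<Sum>l<r. if l = l0 then x (br (kk l)) else 0)"
    by (rule sum.cong) (use j l0 rho_pivot in auto)
  also have "\<dots> = x q" using l0 j by (simp add: sum.delta)
  finally show ?thesis by simp
next
  case False
  have "\<rho> l q = 0" if "l < r" for l using rho_support[OF that] False by blast
  moreover have "x q = 0"
  proof (rule ccontr)
    assume "x q \<noteq> 0"
    then have "is_path Q q" "fst q = v0 \<and> pend Q q = vw" using ik sp unfolding in_kQ_def supp_in_def by blast+
    then show False using branch_is_br False by blast
  qed
  ultimately show ?thesis by simp
qed

text \<open>Subtracting x (alpha^(k_l)) rho_l removes every pivot branch alpha^(k_l); the remaining
  branches outside {}_0B_omega contain a monomial relation.\<close>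

lemma branch_element_mod_I:
  assumes ik: "in_kQ Q x" and sp: "supp_in Q x v0 vw"
  shows "x - (\<lambda>q. if q \<in> B0w Q Rmon br m r kk then x q - (\<Sum>l<r. x (br (kk l)) * \<rho> l q) else 0) \<in> I"
proof -
  define M where "M = {p. x p \<noteq> 0 \<and> has_monomial p}"
  have finM: "finite M" using ik unfolding M_def in_kQ_def by (auto intro: finite_subset)
  define T where "T = (\<Sum>l<r. ksmult (x (br (kk l))) (\<rho> l)) + (\<Sum>p\<in>M. ksmult (x p) (pe p))"
  have TI: "T \<in> I"
  proof -
    have "(\<Sum>l<r. ksmult (x (br (kk l))) (\<rho> l)) \<in> I"
    proof (rule I_sum)
      fix l assume "l \<in> {..<r}"
      then have "\<rho> l \<in> I" unfolding I_eq_ideal_gen by (auto intro: ideal_gen.gen simp: rels_def)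
      then show "ksmult (x (br (kk l))) (\<rho> l) \<in> I" by (rule I_smult)
    qed
    moreover have "(\<Sum>p\<in>M. ksmult (x p) (pe p)) \<in> I"
    proof (rule I_sum)
      fix p assume "p \<in> M"
      then have "x p \<noteq> 0" "has_monomial p" by (auto simp: M_def)
      then have "is_path Q p" "has_monomial p" using ik unfolding in_kQ_def by blast+
      then show "ksmult (x p) (pe p) \<in> I" by (intro I_smult pe_in_I_if_monomial)
    qed
    ultimately show ?thesis unfolding T_def by (rule I_add)
  qed
  have Tq: "T q = (\<Sum>l<r. x (br (kk l)) * \<rho> l q) + (if q \<in> M then x q else 0)" for q
  proof -
    have "(\<Sum>p\<in>M. ksmult (x p) (pe p)) q = (\<Sum>p\<in>M. if p = q then x q else 0)"
      by (simp add: sum_fun_app ksmult_apply pe_apply) (rule sum.cong, auto)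
    also have "\<dots> = (if q \<in> M then x q else 0)" using finM by (simp add: sum.delta')
    finally show ?thesis by (simp add: T_def sum_fun_app ksmult_apply)
  qed
  have "x - (\<lambda>q. if q \<in> B0w Q Rmon br m r kk then x q - (\<Sum>l<r. x (br (kk l)) * \<rho> l q) else 0) = T"
  proof (rule ext)
    fix q
    show "(x - (\<lambda>q. if q \<in> B0w Q Rmon br m r kk then x q - (\<Sum>l<r. x (br (kk l)) * \<rho> l q) else 0)) q = T q"
    proof (cases "q \<in> B0w Q Rmon br m r kk")
      case True
      then have "\<not> has_monomial q" by (auto simp: B0w_iff)
      then have "q \<notin> M" by (simp add: M_def)
      then show ?thesis using True by (simp add: Tq fun_diff_def)
    next
      case False
      show ?thesis
      proof (cases "has_monomial q")
        case True
        have "\<rho> l q = 0" if "l < r" for l using rho_support_branch[OF that] True by blast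
        then have "(\<Sum>l<r. x (br (kk l)) * \<rho> l q) = 0" by simp
        then show ?thesis using False True by (simp add: Tq fun_diff_def M_def)
      next
        case nm: False
        then have "q \<notin> M" by (simp add: M_def)
        then show ?thesis using False branch_element_coeff[OF ik sp False nm] by (simp add: Tq fun_diff_def)
      qed
    qed
  qed
  then show ?thesis using TI by simp
qed

section \<open>Ambiguities\<close>

lemma gens_ge_3: "3 \<le> n \<Longrightarrow> gens Q I R n = pe ` {v. amb Q I (n - 1) v}"
  by (simp add: gens_def)

definition in_I_at :: "('v, 'e) path \<Rightarrow> nat \<Rightarrow> nat \<Rightarrow> bool" where
  "in_I_at v s e \<longleftrightarrow> pe (psub Q v s e) \<in> I"

lemma pe_in_I_length: "pe p \<in> I \<Longrightarrow> 2 \<le> plen p"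
  using ideal_support_length[of "pe p" p] by (simp add: pe_apply)

lemma occurrence_in_I_at: "is_path Q v \<Longrightarrow> occurrence (in_I_at v) (plen v)"
proof (unfold_locales)
  fix a' a d d'
  assume "is_path Q v" "a' \<le> a" "a \<le> d" "d \<le> d'" "d' \<le> plen v" "in_I_at v a d"
  then show "in_I_at v a' d'" unfolding in_I_at_def by (rule ideal_psub_mono)
next
  fix a d :: nat
  assume "d \<le> Suc a"
  then have "plen (psub Q v a d) \<le> 1" by (simp add: plen_def snd_psub)
  then show "\<not> in_I_at v a d" unfolding in_I_at_def using pe_in_I_length by fastforce
qed

lemma left_amb_fact_left_chain:
  assumes v: "is_path Q v" and la: "left_amb_fact Q I n v us"
  shows "occurrence.left_chain (in_I_at v) (plen v) n (offset us)" and "\<forall>j\<le>n. us ! j = psub Q v (offset us j) (offset us (Suc j))"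
proof -
  have len: "length us = Suc n"
    and ch: "\<forall>j<n. pend Q (us ! j) = fst (us ! Suc j)" and veq: "v = path_concat us"
    and p0: "plen (us ! 0) = 1" and ni: "\<forall>j\<in>{1..n}. pe (us ! j) \<notin> I"
    and rel: "\<forall>j<n. pe (pcomp (us ! j) (us ! Suc j)) \<in> I
          \<and> (\<forall>d ys. is_path Q d \<and> fst d = fst (us ! Suc j) \<and> snd (us ! Suc j) = snd d @ ys \<and> ys \<noteq> []
                 \<longrightarrow> pe (pcomp (us ! j) d) \<notin> I)"
    using la by (auto simp: left_amb_fact_def)
  have ne: "us \<noteq> []" using len by auto
  have subs: "\<forall>j\<le>n. us ! j = psub Q v (offset us j) (offset us (Suc j))"
    using nth_eq_psub_offset[of us Q] ch len ne veq by auto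
  then show "\<forall>j\<le>n. us ! j = psub Q v (offset us j) (offset us (Suc j))" .
  have cL: "offset us (Suc n) = plen v" using veq len by (simp add: offset_full plen_def path_concat_def)
  have cle: "j \<le> Suc n \<Longrightarrow> offset us j \<le> plen v" for j using offset_mono'[of j "Suc n" us] cL by simp
  show "occurrence.left_chain (in_I_at v) (plen v) n (offset us)" unfolding occurrence.left_chain_def[OF occurrence_in_I_at[OF v]]
  proof (intro conjI allI impI)
    show "offset us 0 = 0" by simp
    show "offset us 1 = 1" using offset_Suc[of 0 us] p0 len by (simp add: plen_def)
    show "offset us (Suc n) = plen v" by (rule cL)
  next
    fix j assume "j \<le> n" then show "offset us j \<le> offset us (Suc j)" using len by (simp add: offset_mono)
  next
    fix j assume j: "1 \<le> j \<and> j \<le> n"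
    then show "\<not> in_I_at v (offset us j) (offset us (Suc j))" using ni subs by (simp add: in_I_at_def)
  next
    fix j assume j: "j < n"
    have m: "offset us j \<le> offset us (Suc j)" "offset us (Suc j) \<le> offset us (Suc (Suc j))" using j len by (simp_all add: offset_mono)
    have "pcomp (us ! j) (us ! Suc j) = psub Q v (offset us j) (offset us (Suc (Suc j)))"
      using subs j m by (simp add: pcomp_psub)
    moreover have "pe (pcomp (us ! j) (us ! Suc j)) \<in> I" using rel j by blast
    ultimately show "in_I_at v (offset us j) (offset us (Suc (Suc j)))" by (simp add: in_I_at_def)
  next
    fix j e assume j: "j < n" and e: "offset us (Suc j) \<le> e \<and> e < offset us (Suc (Suc j))"
    let ?a = "offset us (Suc j)" and ?b = "offset us (Suc (Suc j))"
    have m: "offset us j \<le> ?a" "?a \<le> ?b" using j len by (simp_all add: offset_mono)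
    have bL: "?b \<le> plen v" using cle[of "Suc (Suc j)"] j by simp
    let ?d = "psub Q v ?a e"
    have "snd (us ! Suc j) = snd ?d @ snd (psub Q v e ?b)" using subs j e by (simp add: snd_psub_append)
    moreover have "snd (psub Q v e ?b) \<noteq> []" using e bL by (simp add: psub_nonempty)
    moreover have "is_path Q ?d" by (rule is_path_psub[OF wf v])
    moreover have "fst ?d = fst (us ! Suc j)" using subs j by simp
    ultimately have "pe (pcomp (us ! j) ?d) \<notin> I" using rel j by blast
    moreover have "pcomp (us ! j) ?d = psub Q v (offset us j) e" using subs j m e by (simp add: pcomp_psub)
    ultimately show "\<not> in_I_at v (offset us j) e" by (simp add: in_I_at_def)
  qed
qed

lemma left_chain_left_amb_fact:
  assumes v: "is_path Q v" and lc: "occurrence.left_chain (in_I_at v) (plen v) n c"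
  shows "left_amb_fact Q I n v (map (\<lambda>j. psub Q v (c j) (c (Suc j))) [0..<Suc n])"
proof -
  interpret O: occurrence "in_I_at v" "plen v" by (rule occurrence_in_I_at[OF v])
  have c: "c 0 = 0" "c 1 = 1" "c (Suc n) = plen v" "\<forall>j\<le>n. c j \<le> c (Suc j)"
    "\<forall>j. 1 \<le> j \<and> j \<le> n \<longrightarrow> \<not> in_I_at v (c j) (c (Suc j))"
    "\<forall>j<n. in_I_at v (c j) (c (Suc (Suc j))) \<and> (\<forall>e. c (Suc j) \<le> e \<and> e < c (Suc (Suc j)) \<longrightarrow> \<not> in_I_at v (c j) e)"
    using lc by (auto simp: O.left_chain_def)
  have cm: "j \<le> j' \<Longrightarrow> j' \<le> Suc n \<Longrightarrow> c j \<le> c j'" for j j' using O.left_chain_mono[OF lc] by blast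
  have cL: "j \<le> Suc n \<Longrightarrow> c j \<le> plen v" for j using cm[of j "Suc n"] c(3) by simp
  define us where "us = map (\<lambda>j. psub Q v (c j) (c (Suc j))) [0..<Suc n]"
  have usj: "j \<le> n \<Longrightarrow> us ! j = psub Q v (c j) (c (Suc j))" for j
    by (simp add: us_def nth_map del: upt_Suc)
  have len: "length us = Suc n" by (simp add: us_def)
  have up: "j \<le> n \<Longrightarrow> is_path Q (us ! j)" for j using usj[of j] c(4) cL[of "Suc j"]
    by (simp add: is_path_psub[OF wf v])
  have veq: "v = path_concat us" unfolding us_def using c(1,3,4) path_concat_psub_cuts by metis
  show ?thesis unfolding us_def[symmetric] left_amb_fact_def
  proof (intro conjI ballI allI impI)
    show "length us = Suc n" by (rule len)
    show "v = path_concat us" by (rule veq)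
  next
    fix u assume "u \<in> set us"
    then obtain j where "j < Suc n" "u = us ! j" using len by (metis in_set_conv_nth)
    then show "is_path Q u" using up by simp
  next
    fix j assume j: "j < n"
    show "pend Q (us ! j) = fst (us ! Suc j)" using j usj c(4) by (simp add: pend_psub)
  next
    show "plen (us ! 0) = 1" using usj[of 0] c(1,2) cL[of 1] by (simp add: plen_psub)
  next
    fix j assume "j \<in> {1..n}"
    then show "pe (us ! j) \<notin> I" using c(5) usj by (simp add: in_I_at_def)
  next
    fix j assume j: "j < n"
    have "pcomp (us ! j) (us ! Suc j) = psub Q v (c j) (c (Suc (Suc j)))"
      using j usj c(4) by (simp add: pcomp_psub)
    then show "pe (pcomp (us ! j) (us ! Suc j)) \<in> I" using c(6) j by (simp add: in_I_at_def)
  next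
    fix j d ys assume j: "j < n" and h: "is_path Q d \<and> fst d = fst (us ! Suc j) \<and> snd (us ! Suc j) = snd d @ ys \<and> ys \<noteq> []"
    let ?a = "c (Suc j)" and ?b = "c (Suc (Suc j))"
    define e where "e = ?a + length (snd d)"
    have ab: "c j \<le> ?a" "?a \<le> ?b" "?b \<le> plen v" using c(4) cL[of "Suc (Suc j)"] j by auto
    have u: "us ! Suc j = psub Q v ?a ?b" using usj j by simp
    have "snd (psub Q v ?a ?b) = snd d @ ys" using h u by simp
    note split = psub_split_at[OF ab(2,3) this, folded e_def]
    have "d = (pvert Q v ?a, snd d)" using h u by (cases d) simp
    also have "\<dots> = psub Q v ?a e" by (rule split(2))
    finally have "pcomp (us ! j) d = pcomp (psub Q v (c j) ?a) (psub Q v ?a e)" using usj[of j] j by simp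
    also have "\<dots> = psub Q v (c j) e" using ab(1) by (simp add: pcomp_psub e_def)
    finally have pc: "pcomp (us ! j) d = psub Q v (c j) e" .
    have "length ys = ?b - e" using split(3) plen_psub[OF ab(3), of Q e] by (metis plen_def snd_conv)
    moreover have "0 < length ys" using h by simp
    ultimately have "e < ?b" by linarith
    then have "\<not> in_I_at v (c j) e" using c(6) j by (simp add: e_def)
    then show "pe (pcomp (us ! j) d) \<notin> I" using pc by (simp add: in_I_at_def)
  qed
qed

lemma right_amb_fact_nth_eq_psub:
  assumes ra: "right_amb_fact Q I n v ws" and j: "j \<le> n"
  shows "ws ! j = psub Q v (offset (rev ws) (n - j)) (offset (rev ws) (Suc (n - j)))"
proof -
  let ?ps = "rev ws"
  have len: "length ws = Suc n" and ch: "\<forall>j<n. pend Q (ws ! Suc j) = fst (ws ! j)"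
    and veq: "v = path_concat ?ps"
    using ra by (auto simp: right_amb_fact_def)
  have psn: "i \<le> n \<Longrightarrow> ?ps ! i = ws ! (n - i)" for i using len by (simp add: rev_nth)
  have chp: "\<forall>i. Suc i < length ?ps \<longrightarrow> pend Q (?ps ! i) = fst (?ps ! Suc i)"
  proof (intro allI impI)
    fix i assume "Suc i < length ?ps"
    then have i: "i < n" using len by simp
    then have "n - i = Suc (n - Suc i)" by simp
    then show "pend Q (?ps ! i) = fst (?ps ! Suc i)" using psn[of i] psn[of "Suc i"] i ch by simp
  qed
  have "?ps ! (n - j) = psub Q v (offset ?ps (n - j)) (offset ?ps (Suc (n - j)))"
    using nth_eq_psub_offset[OF chp, of "n - j"] veq len by force
  then show ?thesis using psn[of "n - j"] j by simp
qed

lemma right_amb_fact_right_chain: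
  assumes v: "is_path Q v" and ra: "right_amb_fact Q I n v ws"
  defines "d \<equiv> \<lambda>j. offset (rev ws) (Suc n - j)"
  shows "occurrence.right_chain (in_I_at v) (plen v) n d" and "\<forall>j\<le>n. ws ! j = psub Q v (d (Suc j)) (d j)"
proof -
  have len: "length ws = Suc n" and veq: "v = path_concat (rev ws)"
    and p0: "plen (ws ! 0) = 1" and ni: "\<forall>j\<in>{1..n}. pe (ws ! j) \<notin> I"
    and rel: "\<forall>j<n. pe (pcomp (ws ! Suc j) (ws ! j)) \<in> I
          \<and> (\<forall>d xs. is_path Q d \<and> snd (ws ! Suc j) = xs @ snd d \<and> xs \<noteq> []
                   \<and> fst d = pend Q (fst (ws ! Suc j), xs)
                 \<longrightarrow> pe (pcomp d (ws ! j)) \<notin> I)"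
    using ra by (auto simp: right_amb_fact_def)
  let ?ps = "rev ws"
  have subs: "\<forall>j\<le>n. ws ! j = psub Q v (d (Suc j)) (d j)"
    using right_amb_fact_nth_eq_psub[OF ra] by (simp add: d_def Suc_diff_le)
  then show "\<forall>j\<le>n. ws ! j = psub Q v (d (Suc j)) (d j)" .
  have cL: "offset ?ps (Suc n) = plen v" using veq len by (simp add: offset_full plen_def path_concat_def)
  have d0: "d 0 = plen v" using cL by (simp add: d_def)
  have dle: "j \<le> j' \<Longrightarrow> d j' \<le> d j" for j j' unfolding d_def by (rule offset_mono') simp
  have dL: "d j \<le> plen v" for j using dle[of 0 j] d0 by simp
  show "occurrence.right_chain (in_I_at v) (plen v) n d" unfolding occurrence.right_chain_def[OF occurrence_in_I_at[OF v]]
  proof (intro conjI allI impI)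
    show "d 0 = plen v" by (rule d0)
    have "offset ?ps (Suc n) = offset ?ps n + length (snd (?ps ! n))" using len by (simp add: offset_Suc)
    moreover have "?ps ! n = ws ! 0" using len by (simp add: rev_nth)
    ultimately show "d 1 = plen v - 1" using cL p0 by (simp add: d_def plen_def)
    show "d (Suc n) = 0" by (simp add: d_def)
  next
    fix j assume "j \<le> n" then show "d (Suc j) \<le> d j" using dle by simp
  next
    fix j assume j: "1 \<le> j \<and> j \<le> n"
    then show "\<not> in_I_at v (d (Suc j)) (d j)" using ni subs by (simp add: in_I_at_def)
  next
    fix j assume j: "j < n"
    have "pcomp (ws ! Suc j) (ws ! j) = psub Q v (d (Suc (Suc j))) (d j)"
      using subs j dle by (simp add: pcomp_psub)
    moreover have "pe (pcomp (ws ! Suc j) (ws ! j)) \<in> I" using rel j by blast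
    ultimately show "in_I_at v (d (Suc (Suc j))) (d j)" by (simp add: in_I_at_def)
  next
    fix j s assume j: "j < n" and s: "d (Suc (Suc j)) < s \<and> s \<le> d (Suc j)"
    let ?a = "d (Suc (Suc j))" and ?b = "d (Suc j)"
    have ab: "?a \<le> ?b" "?b \<le> d j" using dle by auto
    let ?d = "psub Q v s ?b" and ?xs = "snd (psub Q v ?a s)"
    have "snd (ws ! Suc j) = ?xs @ snd ?d" using subs j s by (simp add: snd_psub_append)
    moreover have "?xs \<noteq> []" using s dL[of "Suc j"] by (simp add: psub_nonempty)
    moreover have "is_path Q ?d" by (rule is_path_psub[OF wf v])
    moreover have "fst ?d = pend Q (fst (ws ! Suc j), ?xs)"
      using subs j s pend_psub[of ?a s Q v] by (simp add: psub_def)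
    ultimately have "pe (pcomp ?d (ws ! j)) \<notin> I" using rel j by blast
    moreover have "pcomp ?d (ws ! j) = psub Q v s (d j)" using subs j ab s by (simp add: pcomp_psub)
    ultimately show "\<not> in_I_at v s (d j)" by (simp add: in_I_at_def)
  qed
qed

lemma right_chain_right_amb_fact:
  assumes v: "is_path Q v" and n: "1 \<le> n" and rc: "occurrence.right_chain (in_I_at v) (plen v) n d"
  shows "right_amb_fact Q I n v (map (\<lambda>j. psub Q v (d (Suc j)) (d j)) [0..<Suc n])"
proof -
  interpret O: occurrence "in_I_at v" "plen v" by (rule occurrence_in_I_at[OF v])
  have d: "d 0 = plen v" "d 1 = plen v - 1" "d (Suc n) = 0" "\<forall>j\<le>n. d (Suc j) \<le> d j"
    "\<forall>j. 1 \<le> j \<and> j \<le> n \<longrightarrow> \<not> in_I_at v (d (Suc j)) (d j)"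
    "\<forall>j<n. in_I_at v (d (Suc (Suc j))) (d j) \<and> (\<forall>s. d (Suc (Suc j)) < s \<and> s \<le> d (Suc j) \<longrightarrow> \<not> in_I_at v s (d j))"
    using rc by (auto simp: O.right_chain_def)
  have dm: "j \<le> j' \<Longrightarrow> j' \<le> Suc n \<Longrightarrow> d j' \<le> d j" for j j' using O.right_chain_antimono[OF rc] by blast
  have dL: "j \<le> Suc n \<Longrightarrow> d j \<le> plen v" for j using dm[of 0 j] d(1) by simp
  have L1: "1 \<le> plen v" using O.right_chain_length_pos[OF rc n] .
  define ws where "ws = map (\<lambda>j. psub Q v (d (Suc j)) (d j)) [0..<Suc n]"
  have wsj: "j \<le> n \<Longrightarrow> ws ! j = psub Q v (d (Suc j)) (d j)" for j
    by (simp add: ws_def nth_map del: upt_Suc)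
  have len: "length ws = Suc n" by (simp add: ws_def)
  have veq: "v = path_concat (rev ws)" unfolding ws_def using path_concat_rev_psub_cuts d(1,3,4) by metis
  show ?thesis unfolding ws_def[symmetric] right_amb_fact_def
  proof (intro conjI ballI allI impI)
    show "length ws = Suc n" by (rule len)
    show "v = path_concat (rev ws)" by (rule veq)
  next
    fix u assume "u \<in> set ws"
    then obtain j where j: "j < Suc n" "u = ws ! j" using len by (metis in_set_conv_nth)
    then show "is_path Q u" using wsj[of j] d(4) dL[of j] by (simp add: is_path_psub[OF wf v])
  next
    fix j assume j: "j < n"
    show "pend Q (ws ! Suc j) = fst (ws ! j)" using j wsj d(4) by (simp add: pend_psub)
  next
    show "plen (ws ! 0) = 1" using wsj[of 0] d(1,2) L1 by (simp add: plen_psub)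
  next
    fix j assume "j \<in> {1..n}"
    then show "pe (ws ! j) \<notin> I" using d(5) wsj by (simp add: in_I_at_def)
  next
    fix j assume j: "j < n"
    have "pcomp (ws ! Suc j) (ws ! j) = psub Q v (d (Suc (Suc j))) (d j)"
      using j wsj d(4) by (simp add: pcomp_psub)
    then show "pe (pcomp (ws ! Suc j) (ws ! j)) \<in> I" using d(6) j by (simp add: in_I_at_def)
  next
    fix j d' xs assume j: "j < n" and h: "is_path Q d' \<and> snd (ws ! Suc j) = xs @ snd d' \<and> xs \<noteq> []
                   \<and> fst d' = pend Q (fst (ws ! Suc j), xs)"
    let ?a = "d (Suc (Suc j))" and ?b = "d (Suc j)"
    define s where "s = ?a + length xs"
    have ab: "?a \<le> ?b" "?b \<le> plen v" "?b \<le> d j" using d(4) dL[of "Suc j"] j by auto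
    have u: "ws ! Suc j = psub Q v ?a ?b" using wsj j by simp
    have "snd (psub Q v ?a ?b) = xs @ snd d'" using h u by simp
    note split = psub_split_at[OF ab(1,2) this, folded s_def]
    have "fst d' = pend Q (psub Q v ?a s)" using h u split(2) by simp
    then have "d' = (pvert Q v s, snd d')" using split(1) by (cases d') (simp add: pend_psub s_def)
    also have "\<dots> = psub Q v s ?b" by (rule split(3))
    finally have "pcomp d' (ws ! j) = pcomp (psub Q v s ?b) (psub Q v ?b (d j))" using wsj[of j] j by simp
    also have "\<dots> = psub Q v s (d j)" using split(1) ab(3) by (simp add: pcomp_psub)
    finally have pc: "pcomp d' (ws ! j) = psub Q v s (d j)" .
    have "?a < s" using h by (simp add: s_def)
    then have "\<not> in_I_at v s (d j)" using d(6) j split(1) by blast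
    then show "pe (pcomp d' (ws ! j)) \<notin> I" using pc by (simp add: in_I_at_def)
  qed
qed

lemma in_I_at_psub: "is_path Q v \<Longrightarrow> a \<le> bb \<Longrightarrow> bb \<le> plen v \<Longrightarrow> s \<le> e \<Longrightarrow> e \<le> bb - a \<Longrightarrow>
    in_I_at (psub Q v a bb) s e = in_I_at v (a + s) (a + e)"
  by (simp add: in_I_at_def psub_psub)

lemma amb_path: "amb Q I n v \<Longrightarrow> is_path Q v" by (simp add: amb_def)

lemma amb_left: "amb Q I n v \<Longrightarrow> left_amb_fact Q I n v (lfact Q I n v)"
  unfolding amb_def lfact_def by (metis someI_ex)

lemma amb_left_chain: "amb Q I n v \<Longrightarrow> occurrence.left_chain (in_I_at v) (plen v) n (offset (lfact Q I n v))"
  using left_amb_fact_left_chain(1)[OF amb_path amb_left] .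

lemma amb_right:
  assumes a: "amb Q I n v" and n: "1 \<le> n"
  shows "right_amb_fact Q I n v (rfact Q I n v)"
proof -
  have v: "is_path Q v" using a by (rule amb_path)
  have "occurrence.right_chain (in_I_at v) (plen v) n (occurrence.rseq (in_I_at v) (plen v))"
    using occurrence.left_chain_right_chain[OF occurrence_in_I_at[OF v] amb_left_chain[OF a] n] .
  then have "right_amb_fact Q I n v (map (\<lambda>j. psub Q v (occurrence.rseq (in_I_at v) (plen v) (Suc j)) (occurrence.rseq (in_I_at v) (plen v) j)) [0..<Suc n])"
    by (rule right_chain_right_amb_fact[OF v n])
  then show ?thesis unfolding rfact_def by (metis someI_ex)
qed

lemma amb_if_right_amb_fact:
  assumes v: "is_path Q v" and ra: "right_amb_fact Q I n v ws" and n: "1 \<le> n"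
  shows "amb Q I n v"
proof -
  obtain c where "occurrence.left_chain (in_I_at v) (plen v) n c"
    using occurrence.right_chain_left_chain[OF occurrence_in_I_at[OF v] right_amb_fact_right_chain(1)[OF v ra] n] by blast
  then have "left_amb_fact Q I n v (map (\<lambda>j. psub Q v (c j) (c (Suc j))) [0..<Suc n])"
    by (rule left_chain_left_amb_fact[OF v])
  then show ?thesis using v by (auto simp: amb_def)
qed

lemma amb_degree_unique:
  assumes "amb Q I n v" "amb Q I n' v"
  shows "n = n'"
  using occurrence.left_chain_length_unique[OF occurrence_in_I_at[OF amb_path[OF assms(1)]] amb_left_chain[OF assms(1)] amb_left_chain[OF assms(2)]] .

lemma amb_in_I:
  assumes a: "amb Q I n v" and n: "1 \<le> n"
  shows "pe v \<in> I"
proof -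
  have v: "is_path Q v" using a by (rule amb_path)
  interpret O: occurrence "in_I_at v" "plen v" by (rule occurrence_in_I_at[OF v])
  let ?c = "offset (lfact Q I n v)"
  have lc: "O.left_chain n ?c" using amb_left_chain[OF a] .
  then have o: "in_I_at v (?c 0) (?c (Suc (Suc 0)))" using n by (auto simp: O.left_chain_def)
  have "?c (Suc (Suc 0)) \<le> ?c (Suc n)" using O.left_chain_mono[OF lc, of "Suc (Suc 0)" "Suc n"] n by simp
  then have "?c (Suc (Suc 0)) \<le> plen v" using lc by (simp add: O.left_chain_def)
  then have "in_I_at v 0 (plen v)" using O.occ_mono'[where a'=0 and a="?c 0" and d="?c (Suc (Suc 0))" and d'="plen v"] o
    by simp
  then show ?thesis by (simp add: in_I_at_def psub_full)
qed

lemma left_amb_prefix: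
  assumes v: "is_path Q v" and la: "left_amb_fact Q I n v us" and k: "1 \<le> k" "k \<le> Suc n"
  shows "path_concat (take k us) = psub Q v 0 (offset us k)"
proof -
  have len: "length us = Suc n" and veq: "v = path_concat us" using la by (auto simp: left_amb_fact_def)
  have "concat (map snd us) = concat (map snd (take k us)) @ concat (map snd (drop k us))"
    by (metis append_take_drop_id concat_append map_append)
  then have "take (offset us k) (snd v) = concat (map snd (take k us))"
    using veq by (simp add: offset_def path_concat_def)
  moreover have "fst (hd (take k us)) = fst v" using veq k len by (cases us) (auto simp: path_concat_def)
  ultimately show ?thesis by (simp add: path_concat_def psub_def)
qed

lemma right_amb_suffix:
  assumes v: "is_path Q v" and ra: "right_amb_fact Q I n v ws" and k: "1 \<le> k" "k \<le> Suc n"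
  shows "path_concat (rev (take k ws)) = psub Q v (offset (rev ws) (Suc n - k)) (plen v)"
proof -
  have len: "length ws = Suc n" and veq: "v = path_concat (rev ws)" using ra by (auto simp: right_amb_fact_def)
  let ?ps = "rev ws" and ?m = "Suc n - k"
  have m: "?m \<le> n" using k by simp
  have rt: "rev (take k ws) = drop ?m ?ps" using len by (simp add: rev_take)
  have "concat (map snd ?ps) = concat (map snd (take ?m ?ps)) @ concat (map snd (drop ?m ?ps))"
    by (metis append_take_drop_id concat_append map_append)
  then have sd: "drop (offset ?ps ?m) (snd v) = concat (map snd (drop ?m ?ps))"
    using veq by (simp add: offset_def path_concat_def)
  have hd: "hd (drop ?m ?ps) = ?ps ! ?m" using m len by (simp add: hd_drop_conv_nth)
  have "?ps ! ?m = ws ! (n - ?m)" using len m by (simp add: rev_nth)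
  also have "\<dots> = psub Q v (offset ?ps (Suc n - Suc (n - ?m))) (offset ?ps (Suc n - (n - ?m)))"
    using right_amb_fact_right_chain(2)[OF v ra] m by simp
  finally have "fst (?ps ! ?m) = pvert Q v (offset ?ps ?m)" using m by simp
  moreover have "psub Q v (offset ?ps ?m) (plen v) = (pvert Q v (offset ?ps ?m), drop (offset ?ps ?m) (snd v))"
    by (simp add: psub_def plen_def)
  ultimately show ?thesis using rt sd hd by (simp add: path_concat_def)
qed

lemma dual_d_factors:
  assumes "a \<le> c" "c \<le> plen v"
  shows "(fst v, take a (snd v)) = psub Q v 0 a"
    and "(pend Q (fst v, take a (snd v)), take (c - a) (drop a (snd v))) = psub Q v a c"
    and "(pend Q (pend Q (fst v, take a (snd v)), take (c - a) (drop a (snd v))), drop c (snd v)) = psub Q v c (plen v)"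
proof -
  show 1: "(fst v, take a (snd v)) = psub Q v 0 a" by (simp add: psub_def)
  show 2: "(pend Q (fst v, take a (snd v)), take (c - a) (drop a (snd v))) = psub Q v a c"
    by (simp add: psub_def pvert_def)
  have "pend Q (psub Q v a c) = pvert Q v c" using assms by (simp add: pend_psub)
  then show "(pend Q (pend Q (fst v, take a (snd v)), take (c - a) (drop a (snd v))), drop c (snd v)) = psub Q v c (plen v)"
    using 2 by (simp add: psub_def plen_def)
qed

lemma left_amb_fact_take:
  assumes la: "left_amb_fact Q I n v us" and k: "1 \<le> k" "k \<le> n"
  shows "left_amb_fact Q I k (path_concat (take (Suc k) us)) (take (Suc k) us)"
proof -
  have len: "length us = Suc n" and paths: "\<forall>u\<in>set us. is_path Q u"
    and ch: "\<forall>j<n. pend Q (us ! j) = fst (us ! Suc j)"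
    and p0: "plen (us ! 0) = 1" and ni: "\<forall>j\<in>{1..n}. pe (us ! j) \<notin> I"
    and rel: "\<forall>j<n. pe (pcomp (us ! j) (us ! Suc j)) \<in> I
          \<and> (\<forall>d ys. is_path Q d \<and> fst d = fst (us ! Suc j) \<and> snd (us ! Suc j) = snd d @ ys \<and> ys \<noteq> []
                 \<longrightarrow> pe (pcomp (us ! j) d) \<notin> I)"
    using la by (auto simp: left_amb_fact_def)
  let ?t = "take (Suc k) us"
  show ?thesis unfolding left_amb_fact_def
  proof (intro conjI ballI allI impI)
    show "length ?t = Suc k" using len k by simp
    show "path_concat ?t = path_concat ?t" ..
    show "plen (?t ! 0) = 1" using p0 by simp
  next
    fix u assume "u \<in> set ?t" then show "is_path Q u" using paths by (auto dest: in_set_takeD)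
  next
    fix j assume "j < k" then show "pend Q (?t ! j) = fst (?t ! Suc j)" using ch k by simp
  next
    fix j assume "j \<in> {1..k}" then show "pe (?t ! j) \<notin> I" using ni k by auto
  next
    fix j assume "j < k" then show "pe (pcomp (?t ! j) (?t ! Suc j)) \<in> I" using rel k by simp
  next
    fix j d ys assume j: "j < k" and h: "is_path Q d \<and> fst d = fst (?t ! Suc j) \<and> snd (?t ! Suc j) = snd d @ ys \<and> ys \<noteq> []"
    have e: "?t ! j = us ! j" "?t ! Suc j = us ! Suc j" using j by auto
    have "j < n" using j k by simp
    then have r2: "\<forall>d ys. is_path Q d \<and> fst d = fst (us ! Suc j) \<and> snd (us ! Suc j) = snd d @ ys \<and> ys \<noteq> []
                 \<longrightarrow> pe (pcomp (us ! j) d) \<notin> I" using rel by blast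
    show "pe (pcomp (?t ! j) d) \<notin> I" using r2 h unfolding e by blast
  qed
qed

lemma right_amb_fact_take:
  assumes ra: "right_amb_fact Q I n v ws" and k: "1 \<le> k" "k \<le> n"
  shows "right_amb_fact Q I k (path_concat (rev (take (Suc k) ws))) (take (Suc k) ws)"
proof -
  have len: "length ws = Suc n" and paths: "\<forall>u\<in>set ws. is_path Q u"
    and ch: "\<forall>j<n. pend Q (ws ! Suc j) = fst (ws ! j)"
    and p0: "plen (ws ! 0) = 1" and ni: "\<forall>j\<in>{1..n}. pe (ws ! j) \<notin> I"
    and rel: "\<forall>j<n. pe (pcomp (ws ! Suc j) (ws ! j)) \<in> I
          \<and> (\<forall>d xs. is_path Q d \<and> snd (ws ! Suc j) = xs @ snd d \<and> xs \<noteq> []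
                   \<and> fst d = pend Q (fst (ws ! Suc j), xs)
                 \<longrightarrow> pe (pcomp d (ws ! j)) \<notin> I)"
    using ra by (auto simp: right_amb_fact_def)
  let ?t = "take (Suc k) ws"
  show ?thesis unfolding right_amb_fact_def
  proof (intro conjI ballI allI impI)
    show "length ?t = Suc k" using len k by simp
    show "path_concat (rev ?t) = path_concat (rev ?t)" ..
    show "plen (?t ! 0) = 1" using p0 by simp
  next
    fix u assume "u \<in> set ?t" then show "is_path Q u" using paths by (auto dest: in_set_takeD)
  next
    fix j assume "j < k" then show "pend Q (?t ! Suc j) = fst (?t ! j)" using ch k by simp
  next
    fix j assume "j \<in> {1..k}" then show "pe (?t ! j) \<notin> I" using ni k by auto
  next
    fix j assume "j < k" then show "pe (pcomp (?t ! Suc j) (?t ! j)) \<in> I" using rel k by simp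
  next
    fix j d xs assume j: "j < k" and h: "is_path Q d \<and> snd (?t ! Suc j) = xs @ snd d \<and> xs \<noteq> []
                   \<and> fst d = pend Q (fst (?t ! Suc j), xs)"
    have e: "?t ! j = ws ! j" "?t ! Suc j = ws ! Suc j" using j by auto
    have "j < n" using j k by simp
    then have r2: "\<forall>d xs. is_path Q d \<and> snd (ws ! Suc j) = xs @ snd d \<and> xs \<noteq> []
                   \<and> fst d = pend Q (fst (ws ! Suc j), xs)
                 \<longrightarrow> pe (pcomp d (ws ! j)) \<notin> I" using rel by blast
    show "pe (pcomp d (?t ! j)) \<notin> I" using r2 h unfolding e by blast
  qed
qed

lemma minimal_relation_in_Rmon:
  assumes X: "is_path Q X" and I: "pe X \<in> I"
    and mn: "\<And>s e. s \<le> e \<Longrightarrow> e \<le> plen X \<Longrightarrow> 0 < s \<or> e < plen X \<Longrightarrow> \<not> in_I_at X s e"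
  shows "X \<in> Rmon"
proof -
  obtain q xs ys where q: "q \<in> Rmon" "snd X = xs @ snd q @ ys" "fst q = pend Q (fst X, xs)"
    using monomial_if_pe_in_I[OF X I] by (auto simp: contains_monomial_def path_divides_def)
  have qs: "q = psub Q X (length xs) (length xs + length (snd q))" using path_divides_eq_psub[OF q(2,3)] .
  have "pe q \<in> I" using q(1) unfolding I_eq_ideal_gen by (auto intro: ideal_gen.gen simp: rels_def)
  then have o: "in_I_at X (length xs) (length xs + length (snd q))" using qs by (simp add: in_I_at_def)
  have "length xs + length (snd q) \<le> plen X" using q(2) by (simp add: plen_def)
  then have "\<not> (0 < length xs \<or> length xs + length (snd q) < plen X)"
    using mn[OF le_add1] o by blast
  then have "xs = []" "ys = []" using q(2) by (auto simp: plen_def)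
  then have "q = X" using q by (cases q, cases X) simp
  then show ?thesis using q(1) by simp
qed

lemma amb_reachable_from_source:
  assumes a: "amb Q I n v" and n: "1 \<le> n"
  shows "\<exists>rs. is_path Q (v0, rs) \<and> pend Q (v0, rs) = fst v"
proof -
  have v: "is_path Q v" using a by (rule amb_path)
  obtain q xs ys where q: "q \<in> Rmon" "snd v = xs @ snd q @ ys" "fst q = pend Q (fst v, xs)"
    using monomial_if_pe_in_I[OF v amb_in_I[OF a n]] by (auto simp: contains_monomial_def path_divides_def)
  obtain j xs' ys' where j: "j < m" "snd (br j) = xs' @ snd q @ ys'" "fst q = pend Q (fst (br j), xs')"
    using Rmon_div[OF q(1)] by (auto simp: path_divides_def)
  have qp: "is_path Q q" using Rmon_path[OF q(1)] .
  have "pe q \<in> I" using q(1) unfolding I_eq_ideal_gen by (auto intro: ideal_gen.gen simp: rels_def)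
  then have "2 \<le> plen q" by (rule pe_in_I_length)
  then have qne: "snd q \<noteq> []" by (auto simp: plen_def)
  have "hd (snd q) \<in> arrs Q" "src Q (hd (snd q)) = fst q" using qp qne by (cases q, auto simp: is_path_def)
  then have fqw: "fst q \<noteq> vw" using no_arrow_from_sink by metis
  have "is_path Q (v0, xs' @ (snd q @ ys'))" using br_path[OF j(1)] br_fst[OF j(1)] j(2)
    by (cases "br j") simp
  then have r: "is_path Q (v0, xs')" by (simp add: is_path_append[OF wf])
  have "is_path Q (fst v, xs @ (snd q @ ys))" using v q(2) by (cases v) simp
  then have p: "is_path Q (fst v, xs)" by (simp add: is_path_append[OF wf])
  have e: "pend Q (fst v, xs) = pend Q (v0, xs')" using q(3) j(3) br_fst[OF j(1)] by simp
  have nw: "pend Q (v0, xs') \<noteq> vw" using fqw j(3) br_fst[OF j(1)] by simp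
  show ?thesis using path_from_source_suffix[OF r p e nw] by blast
qed

lemma amb_unique_path:
  assumes a: "amb Q I n v" and n: "1 \<le> n" and nW: "\<not> (fst v = v0 \<and> pend Q v = vw)"
    and p': "is_path Q p'" "fst p' = fst v" "pend Q p' = pend Q v"
  shows "p' = v"
proof -
  have v: "is_path Q v" using a by (rule amb_path)
  show ?thesis
  proof (cases "pend Q v = vw")
    case True
    then show ?thesis using path_to_sink_unique[OF p'(1) v p'(2)] p'(2,3) nW by simp
  next
    case False
    obtain rs where rs: "is_path Q (v0, rs)" "pend Q (v0, rs) = fst v" using amb_reachable_from_source[OF a n] by blast
    show ?thesis using reachable_path_unique[OF p'(1) v p'(2) p'(3) _ rs(1)] rs(2) p'(2,3) False by simp
  qed
qed

lemma amb_left_split: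
  assumes va: "amb Q I n v" and n: "1 \<le> n"
  obtains k where "k < plen v" "path_concat (take n (lfact Q I n v)) = psub Q v 0 k"
    "lfact Q I n v ! n = psub Q v k (plen v)"
proof -
  let ?us = "lfact Q I n v"
  have v: "is_path Q v" using va by (rule amb_path)
  interpret O: occurrence "in_I_at v" "plen v" by (rule occurrence_in_I_at[OF v])
  have la: "left_amb_fact Q I n v ?us" using amb_left[OF va] .
  have lc: "O.left_chain n (offset ?us)" using left_amb_fact_left_chain(1)[OF v la] .
  have "offset ?us n < plen v" using O.left_chain_strict[OF lc, of n] lc by (auto simp: O.left_chain_def)
  moreover have "?us ! n = psub Q v (offset ?us n) (plen v)"
    using left_amb_fact_left_chain(2)[OF v la] lc by (simp add: O.left_chain_def)
  ultimately show ?thesis using that left_amb_prefix[OF v la n] by simp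
qed

lemma amb_right_split:
  assumes va: "amb Q I n v" and n: "1 \<le> n"
  obtains k where "0 < k" "k \<le> plen v" "path_concat (rev (take n (rfact Q I n v))) = psub Q v k (plen v)"
    "rfact Q I n v ! n = psub Q v 0 k"
proof -
  let ?ws = "rfact Q I n v"
  let ?d = "\<lambda>j. offset (rev ?ws) (Suc n - j)"
  have v: "is_path Q v" using va by (rule amb_path)
  interpret O: occurrence "in_I_at v" "plen v" by (rule occurrence_in_I_at[OF v])
  have ra: "right_amb_fact Q I n v ?ws" using amb_right[OF va n] .
  have rc: "O.right_chain n ?d" using right_amb_fact_right_chain(1)[OF v ra] .
  have "0 < ?d n" using O.right_chain_strict[OF rc n, of n] rc by (auto simp: O.right_chain_def)
  moreover have "?d n \<le> plen v"
    using O.right_chain_antimono[OF rc, of 0 n] rc by (auto simp: O.right_chain_def)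
  moreover have "?ws ! n = psub Q v 0 (?d n)"
    using right_amb_fact_right_chain(2)[OF v ra] rc by (simp add: O.right_chain_def)
  ultimately show ?thesis using that right_amb_suffix[OF v ra n] by simp
qed

lemma amb_2_left_prefix_in_Rmon:
  assumes wa: "amb Q I 2 w"
  shows "path_concat (take 2 (lfact Q I 2 w)) \<in> Rmon"
proof -
  let ?us = "lfact Q I 2 w" and ?Y = "path_concat (take 2 (lfact Q I 2 w))"
  let ?c = "offset ?us"
  have wp: "is_path Q w" using wa by (rule amb_path)
  interpret O: occurrence "in_I_at w" "plen w" by (rule occurrence_in_I_at[OF wp])
  have la: "left_amb_fact Q I 2 w ?us" using amb_left[OF wa] .
  have lc: "O.left_chain 2 ?c" using left_amb_fact_left_chain(1)[OF wp la] .
  have c: "?c 0 = 0" "?c 3 = plen w" "in_I_at w 0 (?c 2)" "\<not> in_I_at w (?c 1) (?c 2)"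
    using lc by (auto simp: O.left_chain_def numeral_eq_Suc)
  have c2: "?c 2 \<le> plen w" using O.left_chain_mono[OF lc, of 2 3] c(2) by simp
  have Y: "?Y = psub Q w 0 (?c 2)" using left_amb_prefix[OF wp la, of 2] by simp
  show ?thesis
  proof (rule minimal_relation_in_Rmon)
    show "is_path Q ?Y" using Y c2 by (simp add: is_path_psub[OF wf wp])
    show "pe ?Y \<in> I" using Y c(3) by (simp add: in_I_at_def)
  next
    fix s e assume se: "s \<le> e" "e \<le> plen ?Y" "0 < s \<or> e < plen ?Y"
    have pY: "plen ?Y = ?c 2" using Y c2 by (simp add: plen_psub)
    show "\<not> in_I_at ?Y s e"
    proof
      assume "in_I_at ?Y s e"
      then have oe: "in_I_at w s e" using in_I_at_psub[OF wp, of 0 "?c 2" s e] Y c2 se pY by simp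
      show False
      proof (cases "0 < s")
        case True
        then have "in_I_at w (?c 1) (?c 2)"
          using O.occ_mono'[where a'="?c 1" and a=s and d=e and d'="?c 2"] oe se pY c2 lc
          by (simp add: O.left_chain_def)
        then show False using c(4) by simp
      next
        case False
        then show False using O.left_chain_no_occ_before[OF lc, of 1 e] oe se pY c(1)
          by (simp add: numeral_2_eq_2)
      qed
    qed
  qed
qed

lemma amb_2_right_suffix_in_Rmon:
  assumes wa: "amb Q I 2 w"
  shows "path_concat (rev (take 2 (rfact Q I 2 w))) \<in> Rmon"
proof -
  let ?ws = "rfact Q I 2 w" and ?X = "path_concat (rev (take 2 (rfact Q I 2 w)))"
  let ?d = "\<lambda>j. offset (rev ?ws) (3 - j)"
  have wp: "is_path Q w" using wa by (rule amb_path)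
  interpret O: occurrence "in_I_at w" "plen w" by (rule occurrence_in_I_at[OF wp])
  have ra: "right_amb_fact Q I 2 w ?ws" using amb_right[OF wa] by simp
  have rc: "O.right_chain 2 ?d" using right_amb_fact_right_chain(1)[OF wp ra] by (simp add: numeral_eq_Suc)
  have d: "?d 0 = plen w" "?d 1 = plen w - 1" "in_I_at w (?d 2) (plen w)" "\<not> in_I_at w (?d 2) (?d 1)"
    using rc by (auto simp: O.right_chain_def numeral_eq_Suc)
  have d2: "?d 2 \<le> plen w" using O.right_chain_antimono[OF rc, of 0 2] d(1) by simp
  have X: "?X = psub Q w (?d 2) (plen w)" using right_amb_suffix[OF wp ra, of 2] by (simp add: numeral_eq_Suc)
  show ?thesis
  proof (rule minimal_relation_in_Rmon)
    show "is_path Q ?X" using X d2 by (simp add: is_path_psub[OF wf wp])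
    show "pe ?X \<in> I" using X d(3) by (simp add: in_I_at_def)
  next
    fix s e assume se: "s \<le> e" "e \<le> plen ?X" "0 < s \<or> e < plen ?X"
    have pX: "plen ?X = plen w - ?d 2" using X by (simp add: plen_psub)
    show "\<not> in_I_at ?X s e"
    proof
      assume "in_I_at ?X s e"
      then have oe: "in_I_at w (?d 2 + s) (?d 2 + e)"
        using in_I_at_psub[OF wp, of "?d 2" "plen w" s e] X d2 se pX by simp
      show False
      proof (cases "0 < s")
        case True
        have "in_I_at w (?d 2 + s) (plen w)"
          using O.occ_mono'[where a'="?d 2 + s" and a="?d 2 + s" and d="?d 2 + e" and d'="plen w"] oe se pX d2
          by simp
        then show False using O.right_chain_no_occ_after[OF rc, of 0 "?d 2 + s"] True d(1)
          by (simp add: numeral_2_eq_2)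
      next
        case False
        then have "in_I_at w (?d 2) (?d 1)"
          using O.occ_mono'[where a'="?d 2" and a="?d 2 + s" and d="?d 2 + e" and d'="?d 1"] oe se pX d(1,2) d2
          by simp
        then show False using d(4) by simp
      qed
    qed
  qed
qed

lemma amb_left_prefix_gens:
  assumes wa: "amb Q I n w" and n: "2 \<le> n"
  shows "pe (path_concat (take n (lfact Q I n w))) \<in> gens Q I R n"
proof (cases "n = 2")
  case True
  then show ?thesis using amb_2_left_prefix_in_Rmon[of w] wa by (auto simp: gens_def rels_def)
next
  case False
  let ?us = "lfact Q I n w"
  have n3: "3 \<le> n" using n False by simp
  obtain k where k: "k < plen w" "path_concat (take n ?us) = psub Q w 0 k"
    using amb_left_split[OF wa] n by auto
  have "is_path Q (path_concat (take n ?us))" using k is_path_psub[OF wf amb_path[OF wa]] by simp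
  moreover have "left_amb_fact Q I (n - 1) (path_concat (take n ?us)) (take n ?us)"
    using left_amb_fact_take[OF amb_left[OF wa], of "n - 1"] n3 by simp
  ultimately have "amb Q I (n - 1) (path_concat (take n ?us))" by (auto simp: amb_def)
  then show ?thesis using gens_ge_3[OF n3] by simp
qed

lemma amb_right_suffix_gens:
  assumes wa: "amb Q I n w" and n: "2 \<le> n"
  shows "pe (path_concat (rev (take n (rfact Q I n w)))) \<in> gens Q I R n"
proof (cases "n = 2")
  case True
  then show ?thesis using amb_2_right_suffix_in_Rmon[of w] wa by (auto simp: gens_def rels_def)
next
  case False
  let ?ws = "rfact Q I n w"
  have n3: "3 \<le> n" using n False by simp
  obtain k where k: "k \<le> plen w" "path_concat (rev (take n ?ws)) = psub Q w k (plen w)"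
    using amb_right_split[OF wa] n by auto
  have "is_path Q (path_concat (rev (take n ?ws)))" using k is_path_psub[OF wf amb_path[OF wa]] by simp
  moreover have "right_amb_fact Q I (n - 1) (path_concat (rev (take n ?ws))) (take n ?ws)"
    using right_amb_fact_take[OF amb_right[OF wa], of "n - 1"] n3 by simp
  ultimately have "amb Q I (n - 1) (path_concat (rev (take n ?ws)))"
    using amb_if_right_amb_fact n3 by simp
  then show ?thesis using gens_ge_3[OF n3] by simp
qed

lemma branch_amb_pairs_finite: "finite {(w, c). amb Q I n w \<and> fst w = v0 \<and> pend Q w = vw \<and> c \<in> B0w Q Rmon br m r kk}"
proof (rule finite_subset)
  show "{(w, c). amb Q I n w \<and> fst w = v0 \<and> pend Q w = vw \<and> c \<in> B0w Q Rmon br m r kk}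
      \<subseteq> (br ` {..<m}) \<times> (br ` {..<m})"
  proof
    fix x assume "x \<in> {(w, c). amb Q I n w \<and> fst w = v0 \<and> pend Q w = vw \<and> c \<in> B0w Q Rmon br m r kk}"
    then obtain w c where x: "x = (w, c)" and h: "amb Q I n w" "fst w = v0" "pend Q w = vw" "c \<in> B0w Q Rmon br m r kk"
      by auto
    have "\<exists>j<m. w = br j" using branch_is_br[OF amb_path[OF h(1)] h(2,3)] .
    moreover have "\<exists>j<m. c = br j" using h(4) by (auto simp: B0w_iff)
    ultimately show "x \<in> (br ` {..<m}) \<times> (br ` {..<m})" using x by auto
  qed
  show "finite ((br ` {..<m}) \<times> (br ` {..<m}))" by simp
qed

section \<open>Cocycles and coboundaries\<close>

lemma supp_in_pe: "supp_in Q (pe p) (fst p) (pend Q p)"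
  unfolding supp_in_def
proof (intro allI impI)
  fix q assume "pe p q \<noteq> 0"
  then have "q = p" by (simp add: pe_apply split: if_splits)
  then show "fst q = fst p \<and> pend Q q = pend Q p" by simp
qed

lemma cochain_scalar_multiple:
  assumes f: "f \<in> cochains Q I R n" and x: "pe p \<in> gens Q I R n"
    and uq: "\<And>p'. is_path Q p' \<Longrightarrow> fst p' = fst p \<Longrightarrow> pend Q p' = pend Q p \<Longrightarrow> p' = p"
  shows "f (pe p) = ksmult (f (pe p) p) (pe p)"
proof (rule ext)
  fix q
  have ik: "in_kQ Q (f (pe p))" and sp: "supp_in Q (f (pe p)) (fst p) (pend Q p)"
    using f x supp_in_pe[of p] by (auto simp: cochains_def)
  show "f (pe p) q = ksmult (f (pe p) p) (pe p) q"
  proof (cases "f (pe p) q = 0")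
    case True
    then show ?thesis by (auto simp: ksmult_apply pe_apply)
  next
    case False
    have "is_path Q q" using ik False unfolding in_kQ_def by blast
    moreover have "fst q = fst p \<and> pend Q q = pend Q p" using sp False unfolding supp_in_def by blast
    ultimately have "is_path Q q" "fst q = fst p" "pend Q q = pend Q p" by auto
    then have "q = p" using uq by blast
    then show ?thesis by (simp add: ksmult_apply pe_apply)
  qed
qed

lemma cochain_at_non_branch_amb:
  assumes g: "g \<in> cochains Q I R n" and n: "3 \<le> n" and v: "amb Q I (n - 1) v"
    and nb: "\<not> (fst v = v0 \<and> pend Q v = vw)"
  obtains lam where "g (pe v) = ksmult lam (pe v)"
proof -
  have "pe v \<in> gens Q I R n" using gens_ge_3[OF n] v by simp
  moreover have "p = v" if "is_path Q p" "fst p = fst v" "pend Q p = pend Q v" for p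
    using amb_unique_path[OF v _ nb that] n by simp
  ultimately show thesis using cochain_scalar_multiple[OF g] that by blast
qed

lemma B0w_branch: "c \<in> B0w Q Rmon br m r kk \<Longrightarrow> is_path Q c \<and> fst c = v0 \<and> pend Q c = vw"
  using br_path br_fst br_pend by (auto simp: B0w_iff)

lemma hbar_cochain:
  assumes "3 \<le> i" and w: "fst w = v0" "pend Q w = vw" and c: "c \<in> B0w Q Rmon br m r kk"
  shows "hbar w c \<in> cochains Q I R i"
  unfolding cochains_def
proof (intro CollectI ballI conjI allI impI)
  fix x assume "x \<in> gens Q I R i"
  have "in_kQ Q (0 :: ('v, 'e, 'k) kq)" by (simp add: in_kQ_def)
  moreover have "in_kQ Q (pe c :: ('v, 'e, 'k) kq)" using B0w_branch[OF c] in_kQ_pe by blast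
  ultimately show "in_kQ Q (hbar w c x)" by (simp add: hbar_def)
  fix a c' assume s: "supp_in Q x a c'"
  show "supp_in Q (hbar w c x) a c'"
  proof (cases "x = pe w")
    case True
    have "(pe w :: ('v, 'e, 'k) kq) w \<noteq> 0" by (simp add: pe_apply)
    then have "fst w = a \<and> pend Q w = c'" using s True unfolding supp_in_def by blast
    then have "a = v0" "c' = vw" using w by auto
    then show ?thesis using True B0w_branch[OF c] by (auto simp: hbar_def supp_in_def pe_apply)
  next
    case False then show ?thesis by (simp add: hbar_def supp_in_def)
  qed
qed

lemma psub_factors_product:
  assumes v: "is_path Q v" and ac: "a \<le> c" "c \<le> plen v"
  shows "kmult Q (kmult Q (pe (psub Q v 0 a)) (ksmult lam (pe (psub Q v a c)))) (pe (psub Q v c (plen v))) = ksmult lam (pe v)"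
proof -
  have p1: "kmult Q (pe (psub Q v 0 a)) (pe (psub Q v a c)) = pe (psub Q v 0 c)"
    using ac by (simp add: kmult_pe_pe[OF wf] is_path_psub[OF wf v] pend_psub pcomp_psub)
  have p2: "kmult Q (pe (psub Q v 0 c)) (pe (psub Q v c (plen v))) = pe v"
    using ac by (simp add: kmult_pe_pe[OF wf] is_path_psub[OF wf v] pend_psub pcomp_psub psub_full)
  show ?thesis by (simp add: kmult_smult_right kmult_smult_left p1 p2)
qed

lemma psub_split_product:
  assumes v: "is_path Q v" and k: "k \<le> plen v"
  shows "kmult Q (pe (psub Q v 0 k)) (pe (psub Q v k (plen v))) = pe v"
  using k by (simp add: kmult_pe_pe[OF wf] is_path_psub[OF wf v] pend_psub pcomp_psub psub_full)

lemma dual_d_odd: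
  assumes "odd n"
  shows "dual_d Q I n f v = (\<Sum>(a, c)\<in>{(a, c). a \<le> c \<and> c \<le> plen v}.
      if amb Q I (n - 1) (psub Q v a c)
      then kmult Q (kmult Q (pe (psub Q v 0 a)) (f (pe (psub Q v a c)))) (pe (psub Q v c (plen v)))
      else 0)"
proof -
  have "(let l = (fst v, take a (snd v)); mid = (pend Q l, take (c - a) (drop a (snd v)));
          rt = (pend Q mid, drop c (snd v))
        in if amb Q I (n - 1) mid then kmult Q (kmult Q (pe l) (f (pe mid))) (pe rt) else 0)
      = (if amb Q I (n - 1) (psub Q v a c)
         then kmult Q (kmult Q (pe (psub Q v 0 a)) (f (pe (psub Q v a c)))) (pe (psub Q v c (plen v)))
         else 0)" if "a \<le> c" "c \<le> plen v" for a c
    using dual_d_factors[OF that] by (simp add: Let_def)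
  then show ?thesis using assms unfolding dual_d_def by (auto intro!: sum.cong)
qed

lemma dual_d_even:
  assumes "even n"
  shows "dual_d Q I n f v = kmult Q (pe (rfact Q I n v ! n)) (f (pe (path_concat (rev (take n (rfact Q I n v))))))
     - kmult Q (f (pe (path_concat (take n (lfact Q I n v))))) (pe (lfact Q I n v ! n))"
  using assms by (simp add: dual_d_def Let_def)

lemma dual_d_odd_branch_amb_in_I:
  assumes n: "odd n" "2 \<le> n" and g: "g \<in> cochains Q I R n" and wa: "amb Q I n w"
    and w: "fst w = v0" "pend Q w = vw"
  shows "dual_d Q I n g w \<in> I"
  unfolding dual_d_odd[OF n(1)]
proof (intro I_sum, clarify)
  fix a c assume ac: "a \<le> c" "c \<le> plen w"
  have wp: "is_path Q w" using wa by (rule amb_path)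
  have n3: "3 \<le> n" using n by presburger
  let ?mid = "psub Q w a c"
  show "(if amb Q I (n - 1) ?mid
      then kmult Q (kmult Q (pe (psub Q w 0 a)) (g (pe ?mid))) (pe (psub Q w c (plen w))) else 0) \<in> I"
  proof (cases "amb Q I (n - 1) ?mid")
    case True
    have "\<not> (fst ?mid = v0 \<and> pend Q ?mid = vw)"
    proof
      assume "fst ?mid = v0 \<and> pend Q ?mid = vw"
      then have "a = 0" "c = plen w" using psub_branch_endpoints[OF wp ac] by simp_all
      then have "amb Q I (n - 1) w" using True by (simp add: psub_full)
      then have "n = n - 1" by (rule amb_degree_unique[OF wa])
      then show False using n3 by simp
    qed
    then obtain lam where "g (pe ?mid) = ksmult lam (pe ?mid)"
      using cochain_at_non_branch_amb[OF g n3 True] by blast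
    then have "kmult Q (kmult Q (pe (psub Q w 0 a)) (g (pe ?mid))) (pe (psub Q w c (plen w))) = ksmult lam (pe w)"
      using psub_factors_product[OF wp ac] by simp
    then show ?thesis using True I_smult[OF amb_in_I[OF wa]] n3 by simp
  qed (simp add: I_zero)
qed

lemma dual_d_even_branch_amb_in_I:
  assumes n: "even n" "2 \<le> n" and g: "g \<in> cochains Q I R n" and wa: "amb Q I n w"
    and w: "fst w = v0" "pend Q w = vw"
  shows "dual_d Q I n g w \<in> I"
proof -
  let ?us = "lfact Q I n w" and ?ws = "rfact Q I n w"
  have wp: "is_path Q w" using wa by (rule amb_path)
  have n1: "1 \<le> n" using n by simp
  obtain k where k: "k < plen w" "path_concat (take n ?us) = psub Q w 0 k" "?us ! n = psub Q w k (plen w)"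
    using amb_left_split[OF wa n1] by blast
  obtain k' where k': "0 < k'" "k' \<le> plen w" "path_concat (rev (take n ?ws)) = psub Q w k' (plen w)"
    "?ws ! n = psub Q w 0 k'"
    using amb_right_split[OF wa n1] by blast
  define Y where "Y = psub Q w 0 k"
  define X where "X = psub Q w k' (plen w)"
  have Yp: "is_path Q Y" and Xp: "is_path Q X"
    using k(1) k'(2) by (simp_all add: Y_def X_def is_path_psub[OF wf wp])
  have "fst Y = v0" "pend Q Y \<noteq> vw" using pvert_neq_sink[OF wp k(1)] w by (simp_all add: Y_def pend_psub)
  then have uY: "p = Y" if "is_path Q p" "fst p = fst Y" "pend Q p = pend Q Y" for p
    using path_from_source_unique[OF that(1) Yp] that by simp
  have "fst X \<noteq> v0" "pend Q X = vw" using pvert_neq_source[OF wp k'(1,2)] w k'(2)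
    by (simp_all add: X_def pend_psub pvert_plen)
  then have uX: "p = X" if "is_path Q p" "fst p = fst X" "pend Q p = pend Q X" for p
    using path_to_sink_unique[OF that(1) Xp] that by simp
  have "pe Y \<in> gens Q I R n" using amb_left_prefix_gens[OF wa n(2)] k(2) by (simp add: Y_def)
  then obtain ly where gY: "g (pe Y) = ksmult ly (pe Y)" using cochain_scalar_multiple[OF g _ uY] by blast
  have "pe X \<in> gens Q I R n" using amb_right_suffix_gens[OF wa n(2)] k'(3) by (simp add: X_def)
  then obtain lx where gX: "g (pe X) = ksmult lx (pe X)" using cochain_scalar_multiple[OF g _ uX] by blast
  have pX: "kmult Q (pe (?ws ! n)) (pe X) = pe w"
    unfolding k'(4) X_def using psub_split_product[OF wp k'(2)] .
  have pY: "kmult Q (pe Y) (pe (?us ! n)) = pe w"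
    unfolding k(3) Y_def using psub_split_product[OF wp less_imp_le[OF k(1)]] .
  have "dual_d Q I n g w = kmult Q (pe (?ws ! n)) (g (pe X)) - kmult Q (g (pe Y)) (pe (?us ! n))"
    unfolding dual_d_even[OF n(1)] k(2) k'(3) X_def Y_def ..
  also have "\<dots> = ksmult lx (pe w) - ksmult ly (pe w)"
    by (simp add: gX gY kmult_smult_right kmult_smult_left pX pY)
  finally show ?thesis using I_diff[OF I_smult[OF amb_in_I[OF wa n1]] I_smult[OF amb_in_I[OF wa n1]]] by simp
qed

lemma dual_d_branch_amb_in_I:
  assumes "2 \<le> n" "g \<in> cochains Q I R n" "amb Q I n w" "fst w = v0" "pend Q w = vw"
  shows "dual_d Q I n g w \<in> I"
  using dual_d_odd_branch_amb_in_I dual_d_even_branch_amb_in_I assms by blast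

lemma hbar_cocycle:
  assumes i: "3 \<le> i" and wa: "amb Q I (i - 1) w" and w: "fst w = v0" "pend Q w = vw"
    and c: "c \<in> B0w Q Rmon br m r kk"
  shows "hbar w c \<in> cocycles Q I R i"
  unfolding cocycles_def
proof (intro CollectI conjI allI impI)
  show "hbar w c \<in> cochains Q I R i" using hbar_cochain[OF i w c] .
  fix v assume va: "amb Q I i v"
  have v: "is_path Q v" using va by (rule amb_path)
  have hbar_0: "hbar w c (pe p) = 0" if "p \<noteq> w" for p using that by (simp add: hbar_def pe_inj)
  have "dual_d Q I i (hbar w c) v = 0"
  proof (cases "odd i")
    case True
    have "psub Q v a c' \<noteq> w" if "a \<le> c'" "c' \<le> plen v" "amb Q I (i - 1) (psub Q v a c')" for a c'
    proof
      assume "psub Q v a c' = w"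
      then have "v = w" using psub_branch_endpoints[OF v that(1,2)] w psub_full by metis
      then have "amb Q I (i - 1) v" using wa by simp
      then have "i = i - 1" by (rule amb_degree_unique[OF va])
      then show False using i by simp
    qed
    then show ?thesis unfolding dual_d_odd[OF True] by (intro sum.neutral) (auto simp: hbar_0)
  next
    case False
    have i1: "1 \<le> i" using i by simp
    obtain k where k: "k < plen v" "path_concat (take i (lfact Q I i v)) = psub Q v 0 k"
      using amb_left_split[OF va i1] by blast
    obtain k' where k': "0 < k'" "k' \<le> plen v" "path_concat (rev (take i (rfact Q I i v))) = psub Q v k' (plen v)"
      using amb_right_split[OF va i1] by blast
    have "psub Q v 0 k \<noteq> w" using pvert_neq_sink[OF v k(1)] w by (auto simp: pend_psub)
    moreover have "psub Q v k' (plen v) \<noteq> w" using pvert_neq_source[OF v k'(1,2)] w by auto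
    moreover have "even i" using False by simp
    ultimately show ?thesis unfolding dual_d_even[OF \<open>even i\<close>] k(2) k'(3) by (simp add: hbar_0)
  qed
  then show "dual_d Q I i (hbar w c) v \<in> I" using I_zero by simp
qed

definition hbar_index :: "nat \<Rightarrow> (('v, 'e) path \<times> ('v, 'e) path) set" where
  "hbar_index i = {(w, c). amb Q I (i - 1) w \<and> fst w = v0 \<and> pend Q w = vw \<and> c \<in> B0w Q Rmon br m r kk}"

definition hbar_comb :: "(('v, 'e) path \<times> ('v, 'e) path \<Rightarrow> 'k) \<Rightarrow> ('v, 'e, 'k) cochain" where
  "hbar_comb lam = (\<Sum>j\<in>{j. lam j \<noteq> 0}. csmult (lam j) ((\<lambda>(w, c). hbar w c) j))"

lemma hbar_comb_cochain:
  assumes i: "3 \<le> i" and l: "\<forall>j. lam j \<noteq> 0 \<longrightarrow> j \<in> hbar_index i"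
  shows "hbar_comb lam \<in> cochains Q I R i"
  unfolding hbar_comb_def
proof (rule cochains_sum)
  fix j assume "j \<in> {j. lam j \<noteq> 0}"
  then obtain w c where j: "j = (w, c)" "fst w = v0" "pend Q w = vw" "c \<in> B0w Q Rmon br m r kk"
    using l by (cases j) (auto simp: hbar_index_def)
  show "csmult (lam j) ((\<lambda>(w, c). hbar w c) j) \<in> cochains Q I R i"
    using j hbar_cochain[OF i j(2,3,4)] cochains_csmult by simp
qed

lemma hbar_comb_apply: "finite {j. lam j \<noteq> 0} \<Longrightarrow> hbar_comb lam (pe v) = (\<lambda>q. lam (v, q))"
  unfolding hbar_comb_def by (rule ext) (rule hbar_sum_apply)

lemma coboundary_if_values_in_I:
  assumes f: "f \<in> cochains Q I R i" and fI: "\<And>v. amb Q I (i - 1) v \<Longrightarrow> f (pe v) \<in> I"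
  shows "f \<in> coboundaries Q I R i"
  unfolding coboundaries_def
proof (intro CollectI conjI bexI[of _ "\<lambda>_. 0"] allI impI)
  show "(\<lambda>_. 0) \<in> cochains Q I R (i - 1)" using cochains_zero by (simp add: zero_fun_def)
qed (use f fI in \<open>simp_all add: dual_d_zero\<close>)

lemma coboundary_at_branch_amb_in_I:
  assumes i: "3 \<le> i" and f: "f \<in> coboundaries Q I R i" and wa: "amb Q I (i - 1) w"
    and w: "fst w = v0" "pend Q w = vw"
  shows "f (pe w) \<in> I"
proof -
  obtain g where g: "g \<in> cochains Q I R (i - 1)" "f (pe w) - dual_d Q I (i - 1) g w \<in> I"
    using f wa unfolding coboundaries_def by blast
  have "dual_d Q I (i - 1) g w \<in> I" using dual_d_branch_amb_in_I[OF _ g(1) wa w] i by simp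
  then have "(f (pe w) - dual_d Q I (i - 1) g w) + dual_d Q I (i - 1) g w \<in> I" by (rule I_add[OF g(2)])
  then show ?thesis by simp
qed

text \<open>At a non-branch ambiguity a cochain takes a multiple of the ambiguity itself, which lies in I.\<close>

lemma cochain_congruent_hbar_comb:
  assumes i: "3 \<le> i" and z: "z \<in> cochains Q I R i"
  obtains lam where "finite {j. lam j \<noteq> 0}" "\<forall>j. j \<notin> hbar_index i \<longrightarrow> lam j = 0"
    "\<And>v. amb Q I (i - 1) v \<Longrightarrow> (z - hbar_comb lam) (pe v) \<in> I"
proof -
  define lam where "lam = (\<lambda>(w, q). if (w, q) \<in> hbar_index i
      then z (pe w) q - (\<Sum>l<r. z (pe w) (br (kk l)) * \<rho> l q) else 0)"
  have supp: "{j. lam j \<noteq> 0} \<subseteq> hbar_index i" by (auto simp: lam_def split: if_splits)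
  then have fin: "finite {j. lam j \<noteq> 0}"
    using finite_subset branch_amb_pairs_finite[of "i - 1"] by (simp add: hbar_index_def)
  have "(z - hbar_comb lam) (pe v) \<in> I" if va: "amb Q I (i - 1) v" for v
  proof (cases "fst v = v0 \<and> pend Q v = vw")
    case True
    have "pe v \<in> gens Q I R i" using gens_ge_3[OF i] va by simp
    then have "in_kQ Q (z (pe v))" "supp_in Q (z (pe v)) v0 vw"
      using z supp_in_pe[of v] True by (auto simp: cochains_def)
    moreover have "hbar_comb lam (pe v) = (\<lambda>q. if q \<in> B0w Q Rmon br m r kk
        then z (pe v) q - (\<Sum>l<r. z (pe v) (br (kk l)) * \<rho> l q) else 0)"
      using hbar_comb_apply[OF fin] True va by (auto simp: lam_def hbar_index_def)
    ultimately show ?thesis using branch_element_mod_I by (simp add: fun_diff_def)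
  next
    case False
    obtain c where "z (pe v) = ksmult c (pe v)" using cochain_at_non_branch_amb[OF z i va False] .
    then have "z (pe v) \<in> I" using I_smult[OF amb_in_I[OF va]] i by simp
    moreover have "hbar_comb lam (pe v) = 0"
      using hbar_comb_apply[OF fin] False by (auto simp: lam_def hbar_index_def zero_fun_def)
    ultimately show ?thesis by (simp add: fun_diff_def)
  qed
  moreover have "\<forall>j. j \<notin> hbar_index i \<longrightarrow> lam j = 0" using supp by blast
  ultimately show thesis using that fin by blast
qed

lemma hbar_comb_unique:
  assumes i: "3 \<le> i"
    and l1: "finite {j. lam1 j \<noteq> 0}" "\<forall>j. j \<notin> hbar_index i \<longrightarrow> lam1 j = 0" "z - hbar_comb lam1 \<in> coboundaries Q I R i"
    and l2: "finite {j. lam2 j \<noteq> 0}" "\<forall>j. j \<notin> hbar_index i \<longrightarrow> lam2 j = 0" "z - hbar_comb lam2 \<in> coboundaries Q I R i"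
  shows "lam1 = lam2"
proof (rule ext, clarify)
  fix w q
  show "lam1 (w, q) = lam2 (w, q)"
  proof (cases "(w, q) \<in> hbar_index i")
    case False
    then show ?thesis using l1(2) l2(2) by metis
  next
    case True
    then have wa: "amb Q I (i - 1) w" and w: "fst w = v0" "pend Q w = vw" by (auto simp: hbar_index_def)
    define y where "y = (z - hbar_comb lam1) (pe w) - (z - hbar_comb lam2) (pe w)"
    have y: "y = (\<lambda>q'. lam2 (w, q') - lam1 (w, q'))"
      unfolding y_def using hbar_comb_apply[OF l1(1)] hbar_comb_apply[OF l2(1)] by (simp add: fun_diff_def)
    have "y \<in> I" unfolding y_def
      using I_diff coboundary_at_branch_amb_in_I[OF i _ wa w] l1(3) l2(3) by blast
    moreover have "q' \<in> B0w Q Rmon br m r kk" if "y q' \<noteq> 0" for q'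
    proof -
      have "lam1 (w, q') \<noteq> 0 \<or> lam2 (w, q') \<noteq> 0" using that y by auto
      then have "(w, q') \<in> hbar_index i" using l1(2) l2(2) by blast
      then show ?thesis by (simp add: hbar_index_def)
    qed
    ultimately have "y = 0" by (rule ideal_vanishes_on_B0w)
    then show ?thesis using y by (metis eq_iff_diff_eq_0 zero_fun_def)
  qed
qed

lemma hbar_quotient_basis:
  assumes i: "3 \<le> i"
  shows "quotient_basis (cocycles Q I R i) (coboundaries Q I R i) (hbar_index i) (\<lambda>(w, c). hbar w c)"
  unfolding quotient_basis_def hbar_comb_def[symmetric]
proof (intro conjI ballI)
  fix j assume "j \<in> hbar_index i"
  then show "(\<lambda>(w, c). hbar w c) j \<in> cocycles Q I R i" using hbar_cocycle[OF i] by (auto simp: hbar_index_def)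
next
  fix z assume "z \<in> cocycles Q I R i"
  then have z: "z \<in> cochains Q I R i" by (simp add: cocycles_def)
  obtain lam where lam: "finite {j. lam j \<noteq> 0}" "\<forall>j. j \<notin> hbar_index i \<longrightarrow> lam j = 0"
    "\<And>v. amb Q I (i - 1) v \<Longrightarrow> (z - hbar_comb lam) (pe v) \<in> I"
    using cochain_congruent_hbar_comb[OF i z] by blast
  have "hbar_comb lam \<in> cochains Q I R i" using hbar_comb_cochain[OF i] lam(2) by blast
  then have "z - hbar_comb lam \<in> coboundaries Q I R i"
    using coboundary_if_values_in_I cochains_diff[OF z] lam(3) by blast
  then show "\<exists>!lam. finite {j. lam j \<noteq> 0} \<and> (\<forall>j. j \<notin> hbar_index i \<longrightarrow> lam j = 0)
      \<and> z - hbar_comb lam \<in> coboundaries Q I R i"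
    using lam hbar_comb_unique[OF i] by (intro ex1I[of _ lam]) blast+
qed

end

theorem theorem3p9:
  fixes Q :: "('v, 'e) quiver" and v0 vw :: 'v
    and Rmon :: "('v, 'e) path set" and br :: "nat \<Rightarrow> ('v, 'e) path"
    and m r :: nat and kk :: "nat \<Rightarrow> nat" and b :: "nat \<Rightarrow> nat \<Rightarrow> 'k::field_char_0"
    and I :: "('v, 'e, 'k) kq set" and i :: nat
  assumes "toupie_algebra Q v0 vw Rmon br m r kk b I"
    and "3 \<le> i"
  shows "quotient_basis
           (cocycles Q I (rels Rmon br m r kk b) i)
           (coboundaries Q I (rels Rmon br m r kk b) i)
           {(w, c). amb Q I (i - 1) w \<and> fst w = v0 \<and> pend Q w = vw \<and> c \<in> B0w Q Rmon br m r kk}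
           (\<lambda>(w, c). hbar w c)"
proof -
  interpret toupie_alg Q v0 vw Rmon br m r kk b I by (rule toupie_alg.intro) (rule assms(1))
  show ?thesis using hbar_quotient_basis[OF assms(2)] by (simp add: hbar_index_def)
qed

end
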